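(* The rational map $(F,t)\mapsto W_{F,t}$ from $U$ to the moduli space of smooth cubic threefolds is dominant.
   Context: Let $Q\subset\mathbb{P}^3$ be $x_0x_3=x_1x_2$. $U_0$ is the space of cubic forms $F(x_0,\dots,x_3)$ such that the curve cut out by $F$ on $Q$ is smooth, does not pass through $[0,0,0,1]$, and is tangent with multiplicity $2$ to the lines $x_0=x_1=0$ and $x_0=x_2=0$; $U=U_0\times\mathbb{A}^1$ with coordinate $t$. For $(F,t)\in U$, $W_{F,t}\subset\mathbb{P}^4$ (coordinates $x_0,\dots,x_3,x_5$) is the cubic threefold $F(x_0,\dots,x_3)-x_5(x_0x_3-x_1x_2)-t\,x_0x_5^2=0$. *)

theory Defs
  imports Complex_Main
begin

text \<open>Homogeneous forms of degree d in the variables x_0,...,x_(n-1) over the complex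
numbers, represented by their coefficient vectors indexed by exponent vectors.\<close>

definition mons :: "nat \<Rightarrow> nat \<Rightarrow> (nat \<Rightarrow> nat) set" where
  "mons n d = {\<alpha>. (\<forall>i\<ge>n. \<alpha> i = 0) \<and> (\<Sum>i<n. \<alpha> i) = d}"

definition forms :: "nat \<Rightarrow> nat \<Rightarrow> ((nat \<Rightarrow> nat) \<Rightarrow> complex) set" where
  "forms n d = {c. \<forall>\<alpha>. \<alpha> \<notin> mons n d \<longrightarrow> c \<alpha> = 0}"

definition form_eval :: "nat \<Rightarrow> nat \<Rightarrow> ((nat \<Rightarrow> nat) \<Rightarrow> complex) \<Rightarrow> (nat \<Rightarrow> complex) \<Rightarrow> complex" where
  "form_eval n d c x = (\<Sum>\<alpha>\<in>mons n d. c \<alpha> * (\<Prod>i<n. x i ^ \<alpha> i))"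

definition form_deriv :: "nat \<Rightarrow> nat \<Rightarrow> ((nat \<Rightarrow> nat) \<Rightarrow> complex) \<Rightarrow> nat \<Rightarrow> (nat \<Rightarrow> complex) \<Rightarrow> complex" where
  "form_deriv n d c j x =
     (\<Sum>\<alpha>\<in>mons n d. c \<alpha> * of_nat (\<alpha> j) *
        (\<Prod>i<n. if i = j then x i ^ (\<alpha> i - 1) else x i ^ \<alpha> i))"

definition nonzero_vec :: "nat \<Rightarrow> (nat \<Rightarrow> complex) \<Rightarrow> bool" where
  "nonzero_vec n x \<longleftrightarrow> (\<exists>i<n. x i \<noteq> 0)"

definition smooth_form :: "nat \<Rightarrow> nat \<Rightarrow> ((nat \<Rightarrow> nat) \<Rightarrow> complex) \<Rightarrow> bool" where
  "smooth_form n d c \<longleftrightarrow> c \<in> forms n d \<and>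
     (\<forall>x. nonzero_vec n x \<longrightarrow> \<not> (\<forall>j<n. form_deriv n d c j x = 0))"

definition qQ :: "(nat \<Rightarrow> complex) \<Rightarrow> complex" where
  "qQ x = x 0 * x 3 - x 1 * x 2"

definition qgrad :: "(nat \<Rightarrow> complex) \<Rightarrow> nat \<Rightarrow> complex" where
  "qgrad x j = (if j = 0 then x 3 else if j = 1 then - x 2 else if j = 2 then - x 1
                else if j = 3 then x 0 else 0)"

text \<open>The curve cut out by the cubic F on Q is smooth (Jacobian criterion for the
complete intersection F = q = 0 in P^3).\<close>
definition smooth_curve_on_Q :: "((nat \<Rightarrow> nat) \<Rightarrow> complex) \<Rightarrow> bool" where
  "smooth_curve_on_Q F \<longleftrightarrow>
     (\<forall>x. nonzero_vec 4 x \<and> form_eval 4 3 F x = 0 \<and> qQ x = 0 \<longrightarrow>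
        \<not> (\<exists>l m. (l, m) \<noteq> (0, 0) \<and>
              (\<forall>j<4. l * form_deriv 4 3 F j x + m * qgrad x j = 0)))"

definition line1 :: "complex \<Rightarrow> complex \<Rightarrow> nat \<Rightarrow> complex" where
  "line1 s u = (\<lambda>i. if i = 2 then s else if i = 3 then u else 0)"

definition line2 :: "complex \<Rightarrow> complex \<Rightarrow> nat \<Rightarrow> complex" where
  "line2 s u = (\<lambda>i. if i = 1 then s else if i = 3 then u else 0)"

text \<open>Tangency with multiplicity 2: the restriction of F to the line is a binary cubic
with a root of multiplicity exactly 2.\<close>
definition tangent2 :: "((nat \<Rightarrow> nat) \<Rightarrow> complex) \<Rightarrow> (complex \<Rightarrow> complex \<Rightarrow> nat \<Rightarrow> complex) \<Rightarrow> bool" where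
  "tangent2 F L \<longleftrightarrow> (\<exists>a b c d. a * d - b * c \<noteq> 0 \<and>
      (\<forall>s u. form_eval 4 3 F (L s u) = (a * s + b * u)^2 * (c * s + d * u)))"

definition U0 :: "((nat \<Rightarrow> nat) \<Rightarrow> complex) set" where
  "U0 = {F \<in> forms 4 3. smooth_curve_on_Q F
          \<and> form_eval 4 3 F (\<lambda>i. if i = 3 then 1 else 0) \<noteq> 0
          \<and> tangent2 F line1 \<and> tangent2 F line2}"

text \<open>The cubic threefold W_{F,t}; the coordinate x5 of the paper is index 4 here.\<close>
definition Wform :: "((nat \<Rightarrow> nat) \<Rightarrow> complex) \<Rightarrow> complex \<Rightarrow> (nat \<Rightarrow> complex) \<Rightarrow> complex" where
  "Wform F t x = form_eval 4 3 F x - x 4 * qQ x - t * x 0 * (x 4)^2"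

definition matvec :: "nat \<Rightarrow> (nat \<Rightarrow> nat \<Rightarrow> complex) \<Rightarrow> (nat \<Rightarrow> complex) \<Rightarrow> nat \<Rightarrow> complex" where
  "matvec n A x = (\<lambda>i. \<Sum>j<n. A i j * x j)"

definition invertible_mat :: "nat \<Rightarrow> (nat \<Rightarrow> nat \<Rightarrow> complex) \<Rightarrow> bool" where
  "invertible_mat n A \<longleftrightarrow> (\<exists>B. \<forall>i<n. \<forall>k<n.
      (\<Sum>j<n. A i j * B j k) = (if i = k then 1 else 0))"

inductive poly_fun :: "(('i \<Rightarrow> complex) \<Rightarrow> complex) \<Rightarrow> bool" where
  pconst: "poly_fun (\<lambda>_. a)"
| pvar: "poly_fun (\<lambda>c. c i)"
| padd: "poly_fun p \<Longrightarrow> poly_fun q \<Longrightarrow> poly_fun (\<lambda>c. p c + q c)"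
| pmult: "poly_fun p \<Longrightarrow> poly_fun q \<Longrightarrow> poly_fun (\<lambda>c. p c * q c)"

definition zariski_dense_in :: "('i \<Rightarrow> complex) set \<Rightarrow> ('i \<Rightarrow> complex) set \<Rightarrow> bool" where
  "zariski_dense_in T V \<longleftrightarrow> T \<subseteq> V \<and>
     (\<forall>p. poly_fun p \<and> (\<forall>c\<in>T. p c = 0) \<longrightarrow> (\<forall>c\<in>V. p c = 0))"

definition image_cubics :: "((nat \<Rightarrow> nat) \<Rightarrow> complex) set" where
  "image_cubics = {c. smooth_form 5 3 c \<and>
     (\<exists>F t A lam. F \<in> U0 \<and> invertible_mat 5 A \<and> lam \<noteq> 0 \<and>
        (\<forall>x. form_eval 5 3 c x = lam * Wform F t (matvec 5 A x)))}"

end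

theory Submission
  imports Defs "HOL-Analysis.Analysis" "HOL-Computational_Algebra.Polynomial"
begin

text \<open>
  Dominance means that the cubic forms projectively equivalent to some \<open>W\<^sub>F\<^sub>,\<^sub>t\<close> are Zariski
  dense among all cubic forms in five variables. We exhibit one explicit \<open>F0 \<in> U0\<close> for which
  \<open>W0 = W\<^sub>F\<^sub>0\<^sub>,\<^sub>1\<close> is smooth and deform it by 35 parameters: 13 coefficients of \<open>F\<close> that do not
  disturb the tangency conditions, the parameter \<open>t\<close>, and 21 entries of a linear change of
  coordinates. The differential at \<open>0\<close> of the resulting map from \<open>\<complex>\<^sup>3\<^sup>5\<close> to the
  35-dimensional space of cubic forms has an explicit right inverse, so by the open mapping
  theorem its image contains a neighbourhood of \<open>W0\<close>. Smoothness of \<open>W\<close> and of the curve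
  \<open>F = Q = 0\<close> are open conditions, so every cubic form near \<open>W0\<close> is in the image set. A
  polynomial vanishing on that set then vanishes on a neighbourhood of \<open>W0\<close> in every line
  through \<open>W0\<close>, hence everywhere.
\<close>

section \<open>Polynomial functions and homogeneous forms\<close>

definition mon_eval :: "nat \<Rightarrow> (nat \<Rightarrow> nat) \<Rightarrow> (nat \<Rightarrow> complex) \<Rightarrow> complex" where
  "mon_eval n \<alpha> x = (\<Prod>i<n. x i ^ \<alpha> i)"

lemma form_eval_mon_eval: "form_eval n d c x = (\<Sum>\<alpha>\<in>mons n d. c \<alpha> * mon_eval n \<alpha> x)"
  by (simp add: form_eval_def mon_eval_def)

lemma mons_subset_bounded:
  "mons n d \<subseteq> {\<alpha>. \<forall>i. (i \<in> {..<n} \<longrightarrow> \<alpha> i \<in> {..d}) \<and> (i \<notin> {..<n} \<longrightarrow> \<alpha> i = 0)}"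
proof (intro subsetI CollectI allI conjI impI)
  fix \<alpha> i assume \<alpha>: "\<alpha> \<in> mons n d"
  show "\<alpha> i \<in> {..d}" if "i \<in> {..<n}"
  proof -
    have "\<alpha> i \<le> (\<Sum>i<n. \<alpha> i)" using that by (intro member_le_sum) auto
    then show ?thesis using \<alpha> by (simp add: mons_def)
  qed
  show "\<alpha> i = 0" if "i \<notin> {..<n}" using that \<alpha> by (simp add: mons_def)
qed

lemma finite_mons [simp]: "finite (mons n d)"
  by (rule finite_subset[OF mons_subset_bounded]) (rule finite_set_of_finite_funs; simp)

lemma mon_eval_add: "mon_eval n (\<lambda>i. \<alpha> i + \<beta> i) x = mon_eval n \<alpha> x * mon_eval n \<beta> x"
  by (simp add: mon_eval_def power_add prod.distrib)

lemma mons_add: "\<alpha> \<in> mons n d1 \<Longrightarrow> \<beta> \<in> mons n d2 \<Longrightarrow> (\<lambda>i. \<alpha> i + \<beta> i) \<in> mons n (d1 + d2)"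
  by (auto simp: mons_def sum.distrib)

definition is_form :: "nat \<Rightarrow> nat \<Rightarrow> ((nat \<Rightarrow> complex) \<Rightarrow> complex) \<Rightarrow> bool" where
  "is_form n d g \<longleftrightarrow> (\<exists>c\<in>forms n d. g = form_eval n d c)"

lemma is_form_zero: "is_form n d (\<lambda>_. 0)"
  unfolding is_form_def forms_def form_eval_def by (rule bexI[of _ "\<lambda>_. 0"]) auto

lemma is_form_const: "is_form n 0 (\<lambda>_. a)"
proof -
  have "mons n 0 = {\<lambda>_. 0}"
    by (auto simp: mons_def fun_eq_iff) (metis lessThan_iff not_le)
  then show ?thesis
    unfolding is_form_def
    by (intro bexI[of _ "\<lambda>\<alpha>. if \<alpha> = (\<lambda>_. 0) then a else 0"]) (auto simp: forms_def form_eval_def)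
qed

lemma is_form_var:
  assumes "j < n"
  shows "is_form n 1 (\<lambda>x. x j)"
proof -
  define e where "e = (\<lambda>i. if i = j then 1 else 0 :: nat)"
  have e: "e \<in> mons n 1" using assms by (auto simp: mons_def e_def)
  have "form_eval n 1 (\<lambda>\<alpha>. if \<alpha> = e then 1 else 0) x = x j" for x
  proof -
    have "form_eval n 1 (\<lambda>\<alpha>. if \<alpha> = e then 1 else 0) x = (\<Sum>\<alpha>\<in>mons n 1. if \<alpha> = e then mon_eval n e x else 0)"
      unfolding form_eval_mon_eval by (rule sum.cong) auto
    also have "\<dots> = mon_eval n e x"
      using e by simp
    also have "\<dots> = (\<Prod>i<n. if i = j then x i else 1)"
      unfolding mon_eval_def by (rule prod.cong) (auto simp: e_def)
    finally show ?thesis using assms by (simp add: prod.delta')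
  qed
  moreover have "(\<lambda>\<alpha>. if \<alpha> = e then 1 else 0) \<in> forms n 1" using e by (auto simp: forms_def)
  ultimately show ?thesis unfolding is_form_def by (intro bexI[of _ "\<lambda>\<alpha>. if \<alpha> = e then 1 else 0"]) auto
qed

lemma is_form_add:
  assumes "is_form n d f" "is_form n d g"
  shows "is_form n d (\<lambda>x. f x + g x)"
proof -
  from assms obtain c1 c2 where "c1 \<in> forms n d" "f = form_eval n d c1" "c2 \<in> forms n d" "g = form_eval n d c2"
    unfolding is_form_def by blast
  then show ?thesis unfolding is_form_def
    by (intro bexI[of _ "\<lambda>\<alpha>. c1 \<alpha> + c2 \<alpha>"]) (auto simp: forms_def form_eval_def sum.distrib distrib_right)
qed

lemma is_form_scale:
  assumes "is_form n d f"
  shows "is_form n d (\<lambda>x. a * f x)"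
proof -
  from assms obtain c where "c \<in> forms n d" "f = form_eval n d c"
    unfolding is_form_def by blast
  then show ?thesis unfolding is_form_def
    by (intro bexI[of _ "\<lambda>\<alpha>. a * c \<alpha>"]) (auto simp: forms_def form_eval_def sum_distrib_left mult.assoc)
qed

lemma is_form_sum:
  "finite I \<Longrightarrow> (\<And>i. i \<in> I \<Longrightarrow> is_form n d (g i)) \<Longrightarrow> is_form n d (\<lambda>x. \<Sum>i\<in>I. g i x)"
  by (induction I rule: finite_induct) (simp_all add: is_form_zero is_form_add)

text \<open>The coefficient of a monomial \<open>\<gamma>\<close> in a product collects all pairs of monomials
  of the factors whose exponents add up to \<open>\<gamma>\<close>.\<close>

lemma is_form_mult:
  assumes "is_form n d1 f" "is_form n d2 g"
  shows "is_form n (d1 + d2) (\<lambda>x. f x * g x)"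
proof -
  from assms obtain c1 c2 where c1: "c1 \<in> forms n d1" "f = form_eval n d1 c1"
    and c2: "c2 \<in> forms n d2" "g = form_eval n d2 c2"
    unfolding is_form_def by blast
  define M where "M = mons n d1 \<times> mons n d2"
  define s where "s = (\<lambda>p::(nat\<Rightarrow>nat)\<times>(nat\<Rightarrow>nat). (\<lambda>i. fst p i + snd p i))"
  define h where "h = (\<lambda>p::(nat\<Rightarrow>nat)\<times>(nat\<Rightarrow>nat). c1 (fst p) * c2 (snd p))"
  define c where "c = (\<lambda>\<gamma>. if \<gamma> \<in> mons n (d1 + d2) then (\<Sum>p\<in>{p \<in> M. s p = \<gamma>}. h p) else 0)"
  have sM: "s ` M \<subseteq> mons n (d1 + d2)" by (auto simp: M_def s_def intro: mons_add)
  have "form_eval n (d1 + d2) c x = f x * g x" for x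
  proof -
    have "form_eval n (d1 + d2) c x
        = (\<Sum>\<gamma>\<in>mons n (d1 + d2). \<Sum>p\<in>{p \<in> M. s p = \<gamma>}. h p * mon_eval n (s p) x)"
      by (simp add: form_eval_mon_eval c_def sum_distrib_right)
    also have "\<dots> = (\<Sum>p\<in>M. h p * mon_eval n (s p) x)"
      by (rule sum.group[OF _ _ sM]) (simp_all add: M_def)
    also have "\<dots> = (\<Sum>p\<in>M. (c1 (fst p) * mon_eval n (fst p) x) * (c2 (snd p) * mon_eval n (snd p) x))"
      by (simp add: h_def s_def mon_eval_add mult_ac)
    also have "\<dots> = form_eval n d1 c1 x * form_eval n d2 c2 x"
      by (simp add: M_def form_eval_mon_eval sum_product sum.cartesian_product case_prod_beta)
    finally show ?thesis using c1 c2 by simp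
  qed
  moreover have "c \<in> forms n (d1 + d2)" by (simp add: forms_def c_def)
  ultimately show ?thesis unfolding is_form_def by (intro bexI[of _ c]) auto
qed

lemma is_form_prod:
  "finite I \<Longrightarrow> (\<And>i. i \<in> I \<Longrightarrow> is_form n (d i) (g i)) \<Longrightarrow>
    is_form n (\<Sum>i\<in>I. d i) (\<lambda>x. \<Prod>i\<in>I. g i x)"
  by (induction I rule: finite_induct) (simp_all add: is_form_const is_form_mult)

lemma is_form_power:
  assumes "is_form n d g"
  shows "is_form n (k * d) (\<lambda>x. g x ^ k)"
proof (induction k)
  case (Suc k)
  then show ?case using is_form_mult[OF assms Suc] by (simp add: add.commute)
qed (simp add: is_form_const)

lemma form_eval_cong:
  "(\<And>i. i < n \<Longrightarrow> x i = y i) \<Longrightarrow> form_eval n d c x = form_eval n d c y"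
  unfolding form_eval_def by (intro sum.cong refl arg_cong2[where f="(*)"] prod.cong) auto

lemma form_deriv_cong:
  "(\<And>i. i < n \<Longrightarrow> x i = y i) \<Longrightarrow> form_deriv n d c j x = form_deriv n d c j y"
  unfolding form_deriv_def by (intro sum.cong refl arg_cong2[where f="(*)"] prod.cong) auto

lemma mon_eval_homogeneous:
  "\<alpha> \<in> mons n d \<Longrightarrow> mon_eval n \<alpha> (\<lambda>i. r * x i) = r ^ d * mon_eval n \<alpha> x"
  unfolding mon_eval_def mons_def
  by (auto simp: power_mult_distrib prod.distrib power_sum[symmetric])

lemma form_eval_homogeneous: "form_eval n d c (\<lambda>i. r * x i) = r ^ d * form_eval n d c x"
  unfolding form_eval_mon_eval
  by (simp add: mon_eval_homogeneous sum_distrib_left mult_ac cong: sum.cong)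

lemma form_deriv_homogeneous:
  assumes "d \<ge> 1"
  shows "form_deriv n d c j (\<lambda>i. r * x i) = r ^ (d - 1) * form_deriv n d c j x"
  unfolding form_deriv_def sum_distrib_left
proof (rule sum.cong[OF refl])
  fix \<alpha> assume \<alpha>: "\<alpha> \<in> mons n d"
  show "c \<alpha> * of_nat (\<alpha> j) * (\<Prod>i<n. if i = j then (r * x i) ^ (\<alpha> i - 1) else (r * x i) ^ \<alpha> i) =
        r ^ (d - 1) * (c \<alpha> * of_nat (\<alpha> j) * (\<Prod>i<n. if i = j then x i ^ (\<alpha> i - 1) else x i ^ \<alpha> i))"
  proof (cases "\<alpha> j = 0")
    case False
    with \<alpha> have j: "j < n" by (auto simp: mons_def intro: ccontr)
    define e where "e = (\<lambda>i. if i = j then \<alpha> i - 1 else \<alpha> i)"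
    have "(\<Sum>i<n. \<alpha> i) = \<alpha> j + (\<Sum>i\<in>{..<n} - {j}. e i)" "(\<Sum>i<n. e i) = e j + (\<Sum>i\<in>{..<n} - {j}. e i)"
      using j by (simp_all add: sum.remove e_def)
    then have e_sum: "(\<Sum>i<n. e i) = d - 1" using \<alpha> False by (simp add: mons_def e_def)
    have "(\<Prod>i<n. if i = j then (r * x i) ^ (\<alpha> i - 1) else (r * x i) ^ \<alpha> i) = (\<Prod>i<n. (r * x i) ^ e i)"
      by (rule prod.cong) (auto simp: e_def)
    also have "\<dots> = r ^ (\<Sum>i<n. e i) * (\<Prod>i<n. x i ^ e i)"
      by (simp add: power_mult_distrib prod.distrib power_sum)
    also have "(\<Prod>i<n. x i ^ e i) = (\<Prod>i<n. if i = j then x i ^ (\<alpha> i - 1) else x i ^ \<alpha> i)"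
      by (rule prod.cong) (auto simp: e_def)
    finally show ?thesis using e_sum by (simp add: mult_ac)
  qed simp
qed

lemma poly_fun_on_line: "poly_fun p \<Longrightarrow> \<exists>Q. \<forall>\<tau>. p (\<lambda>i. a i + \<tau> * b i) = poly Q \<tau>"
proof (induction rule: poly_fun.induct)
  case (pconst c)
  show ?case by (rule exI[of _ "[:c:]"]) simp
next
  case (pvar i)
  show ?case by (rule exI[of _ "[:a i, b i:]"]) (simp add: mult.commute)
next
  case (padd p q)
  then obtain P Q where "\<forall>\<tau>. p (\<lambda>i. a i + \<tau> * b i) = poly P \<tau>" "\<forall>\<tau>. q (\<lambda>i. a i + \<tau> * b i) = poly Q \<tau>"
    by blast
  then show ?case by (intro exI[of _ "P + Q"]) simp
next
  case (pmult p q)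
  then obtain P Q where "\<forall>\<tau>. p (\<lambda>i. a i + \<tau> * b i) = poly P \<tau>" "\<forall>\<tau>. q (\<lambda>i. a i + \<tau> * b i) = poly Q \<tau>"
    by blast
  then show ?case by (intro exI[of _ "P * Q"]) simp
qed

lemma poly_eq_0_if_vanishes_near_0:
  fixes Q :: "complex poly"
  assumes "e > 0" "\<And>\<tau>. norm \<tau> < e \<Longrightarrow> poly Q \<tau> = 0"
  shows "Q = 0"
proof (rule ccontr)
  assume "Q \<noteq> 0"
  then have "finite {x. poly Q x = 0}" by (rule poly_roots_finite)
  moreover have "ball 0 e \<subseteq> {x. poly Q x = 0}" using assms(2) by auto
  ultimately have "finite (UNIV \<inter> ball (0::complex) e)" by (simp add: finite_subset)
  moreover have "(0::complex) islimpt UNIV" by (simp add: islimpt_UNIV)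
  ultimately show False using assms(1) islimpt_eq_infinite_ball by blast
qed

text \<open>A polynomial vanishing on \<open>T\<close> restricts, on the line from \<open>a\<close> to \<open>c\<close>, to a univariate
  polynomial with infinitely many roots near \<open>a\<close>.\<close>

lemma zariski_dense_inI_lines:
  assumes "T \<subseteq> V"
    and "\<And>c. c \<in> V \<Longrightarrow> \<exists>a e. e > 0 \<and> (\<forall>\<tau>. norm \<tau> < e \<longrightarrow> (\<lambda>i. a i + \<tau> * (c i - a i)) \<in> T)"
  shows "zariski_dense_in T V"
  unfolding zariski_dense_in_def
proof (intro conjI assms(1) allI impI ballI)
  fix p c assume p: "poly_fun p \<and> (\<forall>c\<in>T. p c = 0)" and "c \<in> V"
  then obtain a e where e: "e > 0" "\<And>\<tau>. norm \<tau> < e \<Longrightarrow> (\<lambda>i. a i + \<tau> * (c i - a i)) \<in> T"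
    using assms(2) by blast
  obtain Q where Q: "\<And>\<tau>. p (\<lambda>i. a i + \<tau> * (c i - a i)) = poly Q \<tau>"
    using poly_fun_on_line[of p a "\<lambda>i. c i - a i"] p by blast
  have "Q = 0" using e p by (intro poly_eq_0_if_vanishes_near_0[OF e(1)]) (auto simp flip: Q)
  then show "p c = 0" using Q[of 1] by simp
qed

section \<open>Analytic tools\<close>

lemma nonzero_near_compact:
  fixes h :: "'a::metric_space \<times> 'b::topological_space \<Rightarrow> real"
  assumes "continuous_on UNIV h" "compact K" "\<And>y. y \<in> K \<Longrightarrow> h (a, y) \<noteq> 0"
  shows "\<exists>e>0. \<forall>u. dist u a < e \<longrightarrow> (\<forall>y\<in>K. h (u, y) \<noteq> 0)"
proof -
  define W where "W = h -` (UNIV - {0})"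
  have "open W" unfolding W_def by (rule open_vimage) (use assms(1) in auto)
  moreover have "{a} \<times> K \<subseteq> W" using assms(3) by (auto simp: W_def)
  ultimately obtain X where X: "a \<in> X" "open X" "X \<times> K \<subseteq> W"
    using Elementary_Topology.tube_lemma[OF assms(2)] by metis
  then obtain e where e: "e > 0" "ball a e \<subseteq> X" using open_contains_ball by blast
  show ?thesis
  proof (intro exI[of _ e] conjI allI impI ballI)
    fix u y assume "dist u a < e" "y \<in> K"
    then have "(u, y) \<in> W" using e X by (auto simp: dist_commute)
    then show "h (u, y) \<noteq> 0" by (simp add: W_def)
  qed (use e in auto)
qed

lemma has_derivative_vecI:
  fixes f :: "'a::real_normed_vector \<Rightarrow> 'b::euclidean_space ^ 'n"
  assumes "\<And>i. ((\<lambda>x. f x $ i) has_derivative (\<lambda>h. f' h $ i)) (at a)"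
  shows "(f has_derivative f') (at a)"
proof -
  have "((\<lambda>x. f x \<bullet> b) has_derivative (\<lambda>h. f' h \<bullet> b)) (at a within UNIV)" if "b \<in> Basis" for b
  proof -
    from that obtain i c where b: "b = axis i c" "c \<in> Basis" by (auto simp: Basis_vec_def)
    have "((\<lambda>x. (f x $ i) \<bullet> c) has_derivative (\<lambda>h. (f' h $ i) \<bullet> c)) (at a)"
      by (rule has_derivative_inner_left[OF assms])
    then show ?thesis by (simp add: b inner_axis)
  qed
  then show ?thesis using has_derivative_componentwise_within[of f f' a UNIV] by blast
qed

lemma has_derivative_vec_nth: "((\<lambda>u. u $ i) has_derivative (\<lambda>v. v $ i)) F"
  by (rule bounded_linear_imp_has_derivative[OF bounded_linear_vec_nth])

section \<open>Square matrices indexed by natural numbers\<close>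

definition mat_mult :: "nat \<Rightarrow> (nat \<Rightarrow> nat \<Rightarrow> complex) \<Rightarrow> (nat \<Rightarrow> nat \<Rightarrow> complex) \<Rightarrow> nat \<Rightarrow> nat \<Rightarrow> complex" where
  "mat_mult n X Y = (\<lambda>i k. \<Sum>j<n. X i j * Y j k)"

lemma matvec_mat_mult: "matvec n (mat_mult n X Y) x = matvec n X (matvec n Y x)"
proof
  fix i
  have "matvec n (mat_mult n X Y) x i = (\<Sum>k<n. \<Sum>j<n. X i j * Y j k * x k)"
    by (simp add: matvec_def mat_mult_def sum_distrib_right)
  also have "\<dots> = (\<Sum>j<n. \<Sum>k<n. X i j * Y j k * x k)" by (rule sum.swap)
  finally show "matvec n (mat_mult n X Y) x i = matvec n X (matvec n Y x) i"
    by (simp add: matvec_def sum_distrib_left mult.assoc)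
qed

lemma mat_mult_assoc: "mat_mult n (mat_mult n X Y) Z = mat_mult n X (mat_mult n Y Z)"
proof (intro ext)
  fix i k
  have "mat_mult n (mat_mult n X Y) Z i k = (\<Sum>l<n. \<Sum>j<n. X i j * Y j l * Z l k)"
    by (simp add: mat_mult_def sum_distrib_right)
  also have "\<dots> = (\<Sum>j<n. \<Sum>l<n. X i j * Y j l * Z l k)" by (rule sum.swap)
  finally show "mat_mult n (mat_mult n X Y) Z i k = mat_mult n X (mat_mult n Y Z) i k"
    by (simp add: mat_mult_def sum_distrib_left mult.assoc)
qed

lemma invertible_mat_iff_mat_mult:
  "invertible_mat n A \<longleftrightarrow> (\<exists>B. \<forall>i<n. \<forall>k<n. mat_mult n A B i k = (if i = k then 1 else 0))"
  by (simp add: invertible_mat_def mat_mult_def)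

lemma sum_of_bool_mult_lessThan:
  fixes f :: "nat \<Rightarrow> 'a::comm_semiring_1"
  shows "i < n \<Longrightarrow> (\<Sum>j<n. of_bool (i = j) * f j) = f i"
    and "k < n \<Longrightarrow> (\<Sum>j<n. f j * of_bool (j = k)) = f k"
proof -
  have "(\<Sum>j<n. of_bool (i = j) * f j) = (\<Sum>j<n. if j = i then f i else 0)"
    "(\<Sum>j<n. f j * of_bool (j = k)) = (\<Sum>j<n. if j = k then f k else 0)"
    by (auto intro: sum.cong)
  then show "i < n \<Longrightarrow> (\<Sum>j<n. of_bool (i = j) * f j) = f i"
    and "k < n \<Longrightarrow> (\<Sum>j<n. f j * of_bool (j = k)) = f k" by simp_all
qed

lemma invertible_mat_mult:
  assumes "invertible_mat n X" "invertible_mat n Y"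
  shows "invertible_mat n (mat_mult n X Y)"
proof -
  obtain BX BY where BX: "\<And>i k. i < n \<Longrightarrow> k < n \<Longrightarrow> mat_mult n X BX i k = (if i = k then 1 else 0)"
    and BY: "\<And>i k. i < n \<Longrightarrow> k < n \<Longrightarrow> mat_mult n Y BY i k = (if i = k then 1 else 0)"
    using assms unfolding invertible_mat_iff_mat_mult by blast
  have "mat_mult n (mat_mult n Y BY) BX j k = BX j k" if "j < n" for j k
  proof -
    have "mat_mult n (mat_mult n Y BY) BX j k = (\<Sum>l<n. of_bool (j = l) * BX l k)"
      unfolding mat_mult_def[of n "mat_mult n Y BY"] using that by (intro sum.cong) (simp_all add: BY)
    then show ?thesis using that by (simp add: sum_of_bool_mult_lessThan)
  qed
  then have "mat_mult n X (mat_mult n (mat_mult n Y BY) BX) i k = mat_mult n X BX i k" for i k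
    unfolding mat_mult_def[of n X] by (intro sum.cong) simp_all
  then have "mat_mult n (mat_mult n X Y) (mat_mult n BY BX) i k = mat_mult n X BX i k" for i k
    by (simp add: mat_mult_assoc)
  then show ?thesis unfolding invertible_mat_iff_mat_mult using BX by metis
qed

definition id_plus_on :: "(nat \<times> nat) set \<Rightarrow> (nat \<Rightarrow> nat \<Rightarrow> complex) \<Rightarrow> nat \<Rightarrow> nat \<Rightarrow> complex" where
  "id_plus_on S N = (\<lambda>i j. of_bool (i = j) + of_bool ((i, j) \<in> S) * N i j)"

lemma matvec_id_plus_on:
  "i < n \<Longrightarrow> matvec n (id_plus_on S N) y i = y i + (\<Sum>j<n. of_bool ((i, j) \<in> S) * N i j * y j)"
  by (simp add: matvec_def id_plus_on_def distrib_right sum.distrib of_bool_def if_distrib[of "\<lambda>z. z * _"]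
      cong: if_cong)

text \<open>If no two pairs of \<open>S\<close> compose, the part of \<open>N\<close> supported on \<open>S\<close> squares to zero, so
  \<open>I - N\<close> inverts \<open>I + N\<close>.\<close>

lemma invertible_id_plus_on_square_zero:
  assumes "\<And>i j k. (i, j) \<in> S \<Longrightarrow> (j, k) \<notin> S"
  shows "invertible_mat n (id_plus_on S N)"
proof -
  define s where "s = (\<lambda>i j. of_bool ((i, j) \<in> S) * N i j)"
  define B where "B = (\<lambda>i j. of_bool (i = j) - s i j)"
  have "(\<Sum>j<n. id_plus_on S N i j * B j k) = (if i = k then 1 else 0)" if "i < n" "k < n" for i k
  proof -
    have "id_plus_on S N i j * B j k
        = of_bool (i = j) * of_bool (j = k) - of_bool (i = j) * s j k + s i j * of_bool (j = k) - s i j * s j k" for j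
      by (simp add: id_plus_on_def B_def s_def algebra_simps)
    then have "(\<Sum>j<n. id_plus_on S N i j * B j k)
        = (\<Sum>j<n. of_bool (i = j) * of_bool (j = k)) - (\<Sum>j<n. of_bool (i = j) * s j k)
          + (\<Sum>j<n. s i j * of_bool (j = k)) - (\<Sum>j<n. s i j * s j k)"
      by (simp only: sum.distrib sum_subtractf)
    moreover have "(\<Sum>j<n. s i j * s j k) = 0"
      by (rule sum.neutral) (auto simp: s_def dest: assms)
    ultimately show ?thesis using that by (simp only: sum_of_bool_mult_lessThan) simp
  qed
  then show ?thesis unfolding invertible_mat_def by blast
qed

lemma invertible_id_plus_on_diagonal:
  assumes "\<And>i j. (i, j) \<in> S \<longleftrightarrow> i = j" "\<And>i. i < n \<Longrightarrow> 1 + N i i \<noteq> 0"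
  shows "invertible_mat n (id_plus_on S N)"
proof -
  define B where "B = (\<lambda>i j. if i = j then 1 / (1 + N i i) else 0 :: complex)"
  have "(\<Sum>j<n. id_plus_on S N i j * B j k) = (if i = k then 1 else 0)" if "i < n" "k < n" for i k
  proof -
    have "(\<Sum>j<n. id_plus_on S N i j * B j k) = (\<Sum>j<n. if j = i then (1 + N i i) * B i k else 0)"
      by (rule sum.cong) (auto simp: id_plus_on_def assms(1))
    then show ?thesis using that assms(2)[OF that(1)] by (auto simp: B_def)
  qed
  then show ?thesis unfolding invertible_mat_def by blast
qed

section \<open>Cubic monomials in four and five variables\<close>

definition vec5 :: "'a::zero \<Rightarrow> 'a \<Rightarrow> 'a \<Rightarrow> 'a \<Rightarrow> 'a \<Rightarrow> nat \<Rightarrow> 'a" where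
  "vec5 a b c d e = (\<lambda>i. if i = 0 then a else if i = 1 then b else if i = 2 then c
     else if i = 3 then d else if i = 4 then e else 0)"

abbreviation vec4 :: "'a::zero \<Rightarrow> 'a \<Rightarrow> 'a \<Rightarrow> 'a \<Rightarrow> nat \<Rightarrow> 'a" where
  "vec4 a b c d \<equiv> vec5 a b c d 0"

lemma vec5_simps [simp]:
  "vec5 a b c d e 0 = a" "vec5 a b c d e (Suc 0) = b" "vec5 a b c d e 2 = c"
  "vec5 a b c d e 3 = d" "vec5 a b c d e 4 = e"
  by (simp_all add: vec5_def)

lemma vec5_eq_iff [simp]:
  "vec5 a b c d e = vec5 a' b' c' d' e' \<longleftrightarrow> a = a' \<and> b = b' \<and> c = c' \<and> d = d' \<and> e = e'"
proof
  assume "vec5 a b c d e = vec5 a' b' c' d' e'"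
  from fun_cong[OF this, of 0] fun_cong[OF this, of 1] fun_cong[OF this, of 2]
    fun_cong[OF this, of 3] fun_cong[OF this, of 4]
  show "a = a' \<and> b = b' \<and> c = c' \<and> d = d' \<and> e = e'" by simp
qed simp

lemma vec5_expand: "(\<forall>i\<ge>5. x i = 0) \<Longrightarrow> x = vec5 (x 0) (x 1) (x 2) (x 3) (x 4)"
  by (auto simp: vec5_def fun_eq_iff)

lemma sum_lessThan_5: "(\<Sum>i<(5::nat). f i) = f 0 + f 1 + f 2 + f 3 + (f 4 :: 'a::comm_monoid_add)"
  by (simp add: eval_nat_numeral add_ac)

lemma prod_lessThan_5: "(\<Prod>i<(5::nat). f i) = f 0 * f 1 * f 2 * f 3 * (f 4 :: 'a::comm_monoid_mult)"
  by (simp add: eval_nat_numeral mult_ac)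

lemma sum_lessThan_4: "(\<Sum>i<(4::nat). f i) = f 0 + f 1 + f 2 + (f 3 :: 'a::comm_monoid_add)"
  by (simp add: eval_nat_numeral add_ac)

lemma prod_lessThan_4: "(\<Prod>i<(4::nat). f i) = f 0 * f 1 * f 2 * (f 3 :: 'a::comm_monoid_mult)"
  by (simp add: eval_nat_numeral mult_ac)

text \<open>The 35 cubic monomials in five variables. The same type indexes the parameters of the
  deformation below, so that its differential becomes a square matrix.\<close>

datatype cubic_index = X0 | X1 | X2 | X3 | X4 | X5 | X6 | X7 | X8 | X9 | X10 | X11 | X12 | X13
  | X14 | X15 | X16 | X17 | X18 | X19 | X20 | X21 | X22 | X23 | X24 | X25 | X26 | X27 | X28 | X29
  | X30 | X31 | X32 | X33 | X34

lemma UNIV_cubic_index: "(UNIV :: cubic_index set) = {X0, X1, X2, X3, X4, X5, X6, X7, X8, X9,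
  X10, X11, X12, X13, X14, X15, X16, X17, X18, X19, X20, X21, X22, X23, X24, X25, X26, X27, X28,
  X29, X30, X31, X32, X33, X34}"
  by (auto intro: cubic_index.exhaust)

instance cubic_index :: finite
  by standard (simp add: UNIV_cubic_index)

primrec cubic_mon :: "cubic_index \<Rightarrow> nat \<Rightarrow> nat" where
  "cubic_mon X0 = vec5 3 0 0 0 0"
| "cubic_mon X1 = vec5 2 1 0 0 0"
| "cubic_mon X2 = vec5 2 0 1 0 0"
| "cubic_mon X3 = vec5 2 0 0 1 0"
| "cubic_mon X4 = vec5 2 0 0 0 1"
| "cubic_mon X5 = vec5 1 2 0 0 0"
| "cubic_mon X6 = vec5 1 1 1 0 0"
| "cubic_mon X7 = vec5 1 1 0 1 0"
| "cubic_mon X8 = vec5 1 1 0 0 1"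
| "cubic_mon X9 = vec5 1 0 2 0 0"
| "cubic_mon X10 = vec5 1 0 1 1 0"
| "cubic_mon X11 = vec5 1 0 1 0 1"
| "cubic_mon X12 = vec5 1 0 0 2 0"
| "cubic_mon X13 = vec5 1 0 0 1 1"
| "cubic_mon X14 = vec5 1 0 0 0 2"
| "cubic_mon X15 = vec5 0 3 0 0 0"
| "cubic_mon X16 = vec5 0 2 1 0 0"
| "cubic_mon X17 = vec5 0 2 0 1 0"
| "cubic_mon X18 = vec5 0 2 0 0 1"
| "cubic_mon X19 = vec5 0 1 2 0 0"
| "cubic_mon X20 = vec5 0 1 1 1 0"
| "cubic_mon X21 = vec5 0 1 1 0 1"
| "cubic_mon X22 = vec5 0 1 0 2 0"
| "cubic_mon X23 = vec5 0 1 0 1 1"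
| "cubic_mon X24 = vec5 0 1 0 0 2"
| "cubic_mon X25 = vec5 0 0 3 0 0"
| "cubic_mon X26 = vec5 0 0 2 1 0"
| "cubic_mon X27 = vec5 0 0 2 0 1"
| "cubic_mon X28 = vec5 0 0 1 2 0"
| "cubic_mon X29 = vec5 0 0 1 1 1"
| "cubic_mon X30 = vec5 0 0 1 0 2"
| "cubic_mon X31 = vec5 0 0 0 3 0"
| "cubic_mon X32 = vec5 0 0 0 2 1"
| "cubic_mon X33 = vec5 0 0 0 1 2"
| "cubic_mon X34 = vec5 0 0 0 0 3"

lemma inj_cubic_mon: "inj cubic_mon"
proof (rule injI)
  fix m m' :: cubic_index assume "cubic_mon m = cubic_mon m'"
  then show "m = m'" by (cases m; cases m'; simp)
qed

lemma range_cubic_mon: "range cubic_mon = {vec5 3 0 0 0 0, vec5 2 1 0 0 0, vec5 2 0 1 0 0,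
    vec5 2 0 0 1 0, vec5 2 0 0 0 1, vec5 1 2 0 0 0, vec5 1 1 1 0 0, vec5 1 1 0 1 0, vec5 1 1 0 0 1,
    vec5 1 0 2 0 0, vec5 1 0 1 1 0, vec5 1 0 1 0 1, vec5 1 0 0 2 0, vec5 1 0 0 1 1, vec5 1 0 0 0 2,
    vec5 0 3 0 0 0, vec5 0 2 1 0 0, vec5 0 2 0 1 0, vec5 0 2 0 0 1, vec5 0 1 2 0 0, vec5 0 1 1 1 0,
    vec5 0 1 1 0 1, vec5 0 1 0 2 0, vec5 0 1 0 1 1, vec5 0 1 0 0 2, vec5 0 0 3 0 0, vec5 0 0 2 1 0,
    vec5 0 0 2 0 1, vec5 0 0 1 2 0, vec5 0 0 1 1 1, vec5 0 0 1 0 2, vec5 0 0 0 3 0, vec5 0 0 0 2 1,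
    vec5 0 0 0 1 2, vec5 0 0 0 0 3}"
  by (simp add: UNIV_cubic_index)

lemma sum5_eq_3_cases:
  "(a::nat) + b + c + d + e = 3 \<Longrightarrow> (a, b, c, d, e) \<in>
    {(3, 0, 0, 0, 0), (2, 1, 0, 0, 0), (2, 0, 1, 0, 0), (2, 0, 0, 1, 0), (2, 0, 0, 0, 1), (1, 2, 0, 0, 0),
     (1, 1, 1, 0, 0), (1, 1, 0, 1, 0), (1, 1, 0, 0, 1), (1, 0, 2, 0, 0), (1, 0, 1, 1, 0), (1, 0, 1, 0, 1),
     (1, 0, 0, 2, 0), (1, 0, 0, 1, 1), (1, 0, 0, 0, 2), (0, 3, 0, 0, 0), (0, 2, 1, 0, 0), (0, 2, 0, 1, 0),
     (0, 2, 0, 0, 1), (0, 1, 2, 0, 0), (0, 1, 1, 1, 0), (0, 1, 1, 0, 1), (0, 1, 0, 2, 0), (0, 1, 0, 1, 1),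
     (0, 1, 0, 0, 2), (0, 0, 3, 0, 0), (0, 0, 2, 1, 0), (0, 0, 2, 0, 1), (0, 0, 1, 2, 0), (0, 0, 1, 1, 1),
     (0, 0, 1, 0, 2), (0, 0, 0, 3, 0), (0, 0, 0, 2, 1), (0, 0, 0, 1, 2), (0, 0, 0, 0, 3)}"
  apply (subgoal_tac "a \<le> 3 \<and> b \<le> 3 \<and> c \<le> 3 \<and> d \<le> 3 \<and> e \<le> 3")
   apply (simp only: le_Suc_eq numeral_3_eq_3 le_0_eq)
   apply (elim conjE disjE; simp)
  by linarith

lemma sum4_eq_3_cases:
  "(a::nat) + b + c + d = 3 \<Longrightarrow> (a, b, c, d) \<in>
    {(3, 0, 0, 0), (2, 1, 0, 0), (2, 0, 1, 0), (2, 0, 0, 1), (1, 2, 0, 0), (1, 1, 1, 0),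
     (1, 1, 0, 1), (1, 0, 2, 0), (1, 0, 1, 1), (1, 0, 0, 2), (0, 3, 0, 0), (0, 2, 1, 0),
     (0, 2, 0, 1), (0, 1, 2, 0), (0, 1, 1, 1), (0, 1, 0, 2), (0, 0, 3, 0), (0, 0, 2, 1),
     (0, 0, 1, 2), (0, 0, 0, 3)}"
  apply (subgoal_tac "a \<le> 3 \<and> b \<le> 3 \<and> c \<le> 3 \<and> d \<le> 3")
   apply (simp only: le_Suc_eq numeral_3_eq_3 le_0_eq)
   apply (elim conjE disjE; simp)
  by linarith

lemma mons_5_3: "mons 5 3 = range cubic_mon"
proof
  show "range cubic_mon \<subseteq> mons 5 3"
  proof
    fix \<beta> assume "\<beta> \<in> range cubic_mon"
    then obtain m where "\<beta> = cubic_mon m" by blast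
    then show "\<beta> \<in> mons 5 3" by (cases m) (simp_all add: mons_def sum_lessThan_5 vec5_def)
  qed
  show "mons 5 3 \<subseteq> range cubic_mon"
  proof
    fix \<beta> assume \<beta>: "\<beta> \<in> mons 5 3"
    then have e: "\<beta> = vec5 (\<beta> 0) (\<beta> 1) (\<beta> 2) (\<beta> 3) (\<beta> 4)"
      by (intro vec5_expand) (simp add: mons_def)
    have "\<beta> 0 + \<beta> 1 + \<beta> 2 + \<beta> 3 + \<beta> 4 = 3" using \<beta> by (simp add: mons_def sum_lessThan_5)
    from sum5_eq_3_cases[OF this] show "\<beta> \<in> range cubic_mon"
      unfolding range_cubic_mon
      apply (subst e)
      apply (simp only: insert_iff empty_iff prod.inject)
      apply (elim disjE conjE)
      by simp_all
  qed
qed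

definition mons_4_3_list :: "(nat \<Rightarrow> nat) list" where
  "mons_4_3_list = [vec4 3 0 0 0, vec4 2 1 0 0, vec4 2 0 1 0, vec4 2 0 0 1, vec4 1 2 0 0,
    vec4 1 1 1 0, vec4 1 1 0 1, vec4 1 0 2 0, vec4 1 0 1 1, vec4 1 0 0 2, vec4 0 3 0 0,
    vec4 0 2 1 0, vec4 0 2 0 1, vec4 0 1 2 0, vec4 0 1 1 1, vec4 0 1 0 2, vec4 0 0 3 0,
    vec4 0 0 2 1, vec4 0 0 1 2, vec4 0 0 0 3]"

lemma distinct_mons_4_3_list: "distinct mons_4_3_list" by (simp add: mons_4_3_list_def)

lemma mons_4_3: "mons 4 3 = set mons_4_3_list"
proof
  show "set mons_4_3_list \<subseteq> mons 4 3"
    by (auto simp: mons_4_3_list_def mons_def sum_lessThan_4 vec5_def)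
  show "mons 4 3 \<subseteq> set mons_4_3_list"
  proof
    fix \<beta> assume b: "\<beta> \<in> mons 4 3"
    then have e: "\<beta> = vec4 (\<beta> 0) (\<beta> 1) (\<beta> 2) (\<beta> 3)"
      by (auto simp: mons_def vec5_def fun_eq_iff)
    have "\<beta> 0 + \<beta> 1 + \<beta> 2 + \<beta> 3 = 3" using b by (simp add: mons_def sum_lessThan_4)
    from sum4_eq_3_cases[OF this] show "\<beta> \<in> set mons_4_3_list"
      apply (subst e)
      apply (simp only: insert_iff empty_iff prod.inject)
      apply (elim disjE conjE)
      by (simp_all add: mons_4_3_list_def)
  qed
qed

lemma form_eval_5_3_sum: "form_eval 5 3 c x = (\<Sum>m\<in>UNIV. c (cubic_mon m) * mon_eval 5 (cubic_mon m) x)"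
  unfolding form_eval_mon_eval mons_5_3 by (simp add: sum.reindex[OF inj_cubic_mon])

lemma form_deriv_5_3_sum: "form_deriv 5 3 c j x = (\<Sum>m\<in>UNIV. c (cubic_mon m) * of_nat (cubic_mon m j) *
        (\<Prod>i<5. if i = j then x i ^ (cubic_mon m i - 1) else x i ^ cubic_mon m i))"
  unfolding form_deriv_def mons_5_3 by (simp add: sum.reindex[OF inj_cubic_mon])

lemma form_eval_4_3_sum: "form_eval 4 3 c x = (\<Sum>\<alpha>\<leftarrow>mons_4_3_list. c \<alpha> * mon_eval 4 \<alpha> x)"
  unfolding form_eval_mon_eval mons_4_3 by (simp add: sum.distinct_set_conv_list[OF distinct_mons_4_3_list])

lemma form_deriv_4_3_sum: "form_deriv 4 3 c j x = (\<Sum>\<alpha>\<leftarrow>mons_4_3_list. c \<alpha> * of_nat (\<alpha> j) *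
        (\<Prod>i<4. if i = j then x i ^ (\<alpha> i - 1) else x i ^ \<alpha> i))"
  unfolding form_deriv_def mons_4_3 by (simp add: sum.distinct_set_conv_list[OF distinct_mons_4_3_list])

lemma form_eval_5_3: "form_eval 5 3 c x = c (vec5 3 0 0 0 0) * x 0 ^ 3
    + c (vec5 2 1 0 0 0) * x 0 ^ 2 * x 1 + c (vec5 2 0 1 0 0) * x 0 ^ 2 * x 2
    + c (vec5 2 0 0 1 0) * x 0 ^ 2 * x 3 + c (vec5 2 0 0 0 1) * x 0 ^ 2 * x 4
    + c (vec5 1 2 0 0 0) * x 0 * x 1 ^ 2 + c (vec5 1 1 1 0 0) * x 0 * x 1 * x 2
    + c (vec5 1 1 0 1 0) * x 0 * x 1 * x 3 + c (vec5 1 1 0 0 1) * x 0 * x 1 * x 4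
    + c (vec5 1 0 2 0 0) * x 0 * x 2 ^ 2 + c (vec5 1 0 1 1 0) * x 0 * x 2 * x 3
    + c (vec5 1 0 1 0 1) * x 0 * x 2 * x 4 + c (vec5 1 0 0 2 0) * x 0 * x 3 ^ 2
    + c (vec5 1 0 0 1 1) * x 0 * x 3 * x 4 + c (vec5 1 0 0 0 2) * x 0 * x 4 ^ 2
    + c (vec5 0 3 0 0 0) * x 1 ^ 3 + c (vec5 0 2 1 0 0) * x 1 ^ 2 * x 2
    + c (vec5 0 2 0 1 0) * x 1 ^ 2 * x 3 + c (vec5 0 2 0 0 1) * x 1 ^ 2 * x 4
    + c (vec5 0 1 2 0 0) * x 1 * x 2 ^ 2 + c (vec5 0 1 1 1 0) * x 1 * x 2 * x 3
    + c (vec5 0 1 1 0 1) * x 1 * x 2 * x 4 + c (vec5 0 1 0 2 0) * x 1 * x 3 ^ 2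
    + c (vec5 0 1 0 1 1) * x 1 * x 3 * x 4 + c (vec5 0 1 0 0 2) * x 1 * x 4 ^ 2
    + c (vec5 0 0 3 0 0) * x 2 ^ 3 + c (vec5 0 0 2 1 0) * x 2 ^ 2 * x 3
    + c (vec5 0 0 2 0 1) * x 2 ^ 2 * x 4 + c (vec5 0 0 1 2 0) * x 2 * x 3 ^ 2
    + c (vec5 0 0 1 1 1) * x 2 * x 3 * x 4 + c (vec5 0 0 1 0 2) * x 2 * x 4 ^ 2
    + c (vec5 0 0 0 3 0) * x 3 ^ 3 + c (vec5 0 0 0 2 1) * x 3 ^ 2 * x 4
    + c (vec5 0 0 0 1 2) * x 3 * x 4 ^ 2 + c (vec5 0 0 0 0 3) * x 4 ^ 3"
  unfolding form_eval_5_3_sum UNIV_cubic_index by (simp add: mon_eval_def prod_lessThan_5 algebra_simps)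

lemma form_deriv_5_3_0: "form_deriv 5 3 c 0 x = 3 * c (vec5 3 0 0 0 0) * x 0 ^ 2
    + 2 * c (vec5 2 1 0 0 0) * x 0 * x 1 + 2 * c (vec5 2 0 1 0 0) * x 0 * x 2
    + 2 * c (vec5 2 0 0 1 0) * x 0 * x 3 + 2 * c (vec5 2 0 0 0 1) * x 0 * x 4
    + c (vec5 1 2 0 0 0) * x 1 ^ 2 + c (vec5 1 1 1 0 0) * x 1 * x 2 + c (vec5 1 1 0 1 0) * x 1 * x 3
    + c (vec5 1 1 0 0 1) * x 1 * x 4 + c (vec5 1 0 2 0 0) * x 2 ^ 2 + c (vec5 1 0 1 1 0) * x 2 * x 3
    + c (vec5 1 0 1 0 1) * x 2 * x 4 + c (vec5 1 0 0 2 0) * x 3 ^ 2 + c (vec5 1 0 0 1 1) * x 3 * x 4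
    + c (vec5 1 0 0 0 2) * x 4 ^ 2"
  unfolding form_deriv_5_3_sum UNIV_cubic_index by (simp add: prod_lessThan_5 algebra_simps)

lemma form_deriv_5_3_1: "form_deriv 5 3 c 1 x = c (vec5 2 1 0 0 0) * x 0 ^ 2
    + 2 * c (vec5 1 2 0 0 0) * x 0 * x 1 + c (vec5 1 1 1 0 0) * x 0 * x 2
    + c (vec5 1 1 0 1 0) * x 0 * x 3 + c (vec5 1 1 0 0 1) * x 0 * x 4
    + 3 * c (vec5 0 3 0 0 0) * x 1 ^ 2 + 2 * c (vec5 0 2 1 0 0) * x 1 * x 2
    + 2 * c (vec5 0 2 0 1 0) * x 1 * x 3 + 2 * c (vec5 0 2 0 0 1) * x 1 * x 4
    + c (vec5 0 1 2 0 0) * x 2 ^ 2 + c (vec5 0 1 1 1 0) * x 2 * x 3 + c (vec5 0 1 1 0 1) * x 2 * x 4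
    + c (vec5 0 1 0 2 0) * x 3 ^ 2 + c (vec5 0 1 0 1 1) * x 3 * x 4 + c (vec5 0 1 0 0 2) * x 4 ^ 2"
  unfolding form_deriv_5_3_sum UNIV_cubic_index by (simp add: prod_lessThan_5 algebra_simps)

lemma form_deriv_5_3_2: "form_deriv 5 3 c 2 x = c (vec5 2 0 1 0 0) * x 0 ^ 2
    + c (vec5 1 1 1 0 0) * x 0 * x 1 + 2 * c (vec5 1 0 2 0 0) * x 0 * x 2
    + c (vec5 1 0 1 1 0) * x 0 * x 3 + c (vec5 1 0 1 0 1) * x 0 * x 4 + c (vec5 0 2 1 0 0) * x 1 ^ 2
    + 2 * c (vec5 0 1 2 0 0) * x 1 * x 2 + c (vec5 0 1 1 1 0) * x 1 * x 3
    + c (vec5 0 1 1 0 1) * x 1 * x 4 + 3 * c (vec5 0 0 3 0 0) * x 2 ^ 2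
    + 2 * c (vec5 0 0 2 1 0) * x 2 * x 3 + 2 * c (vec5 0 0 2 0 1) * x 2 * x 4
    + c (vec5 0 0 1 2 0) * x 3 ^ 2 + c (vec5 0 0 1 1 1) * x 3 * x 4 + c (vec5 0 0 1 0 2) * x 4 ^ 2"
  unfolding form_deriv_5_3_sum UNIV_cubic_index by (simp add: prod_lessThan_5 algebra_simps)

lemma form_deriv_5_3_3: "form_deriv 5 3 c 3 x = c (vec5 2 0 0 1 0) * x 0 ^ 2
    + c (vec5 1 1 0 1 0) * x 0 * x 1 + c (vec5 1 0 1 1 0) * x 0 * x 2
    + 2 * c (vec5 1 0 0 2 0) * x 0 * x 3 + c (vec5 1 0 0 1 1) * x 0 * x 4
    + c (vec5 0 2 0 1 0) * x 1 ^ 2 + c (vec5 0 1 1 1 0) * x 1 * x 2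
    + 2 * c (vec5 0 1 0 2 0) * x 1 * x 3 + c (vec5 0 1 0 1 1) * x 1 * x 4
    + c (vec5 0 0 2 1 0) * x 2 ^ 2 + 2 * c (vec5 0 0 1 2 0) * x 2 * x 3
    + c (vec5 0 0 1 1 1) * x 2 * x 4 + 3 * c (vec5 0 0 0 3 0) * x 3 ^ 2
    + 2 * c (vec5 0 0 0 2 1) * x 3 * x 4 + c (vec5 0 0 0 1 2) * x 4 ^ 2"
  unfolding form_deriv_5_3_sum UNIV_cubic_index by (simp add: prod_lessThan_5 algebra_simps)

lemma form_deriv_5_3_4: "form_deriv 5 3 c 4 x = c (vec5 2 0 0 0 1) * x 0 ^ 2
    + c (vec5 1 1 0 0 1) * x 0 * x 1 + c (vec5 1 0 1 0 1) * x 0 * x 2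
    + c (vec5 1 0 0 1 1) * x 0 * x 3 + 2 * c (vec5 1 0 0 0 2) * x 0 * x 4
    + c (vec5 0 2 0 0 1) * x 1 ^ 2 + c (vec5 0 1 1 0 1) * x 1 * x 2 + c (vec5 0 1 0 1 1) * x 1 * x 3
    + 2 * c (vec5 0 1 0 0 2) * x 1 * x 4 + c (vec5 0 0 2 0 1) * x 2 ^ 2
    + c (vec5 0 0 1 1 1) * x 2 * x 3 + 2 * c (vec5 0 0 1 0 2) * x 2 * x 4
    + c (vec5 0 0 0 2 1) * x 3 ^ 2 + 2 * c (vec5 0 0 0 1 2) * x 3 * x 4
    + 3 * c (vec5 0 0 0 0 3) * x 4 ^ 2"
  unfolding form_deriv_5_3_sum UNIV_cubic_index by (simp add: prod_lessThan_5 algebra_simps)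

lemma form_eval_4_3: "form_eval 4 3 c x = c (vec4 3 0 0 0) * x 0 ^ 3
    + c (vec4 2 1 0 0) * x 0 ^ 2 * x 1 + c (vec4 2 0 1 0) * x 0 ^ 2 * x 2
    + c (vec4 2 0 0 1) * x 0 ^ 2 * x 3 + c (vec4 1 2 0 0) * x 0 * x 1 ^ 2
    + c (vec4 1 1 1 0) * x 0 * x 1 * x 2 + c (vec4 1 1 0 1) * x 0 * x 1 * x 3
    + c (vec4 1 0 2 0) * x 0 * x 2 ^ 2 + c (vec4 1 0 1 1) * x 0 * x 2 * x 3
    + c (vec4 1 0 0 2) * x 0 * x 3 ^ 2 + c (vec4 0 3 0 0) * x 1 ^ 3
    + c (vec4 0 2 1 0) * x 1 ^ 2 * x 2 + c (vec4 0 2 0 1) * x 1 ^ 2 * x 3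
    + c (vec4 0 1 2 0) * x 1 * x 2 ^ 2 + c (vec4 0 1 1 1) * x 1 * x 2 * x 3
    + c (vec4 0 1 0 2) * x 1 * x 3 ^ 2 + c (vec4 0 0 3 0) * x 2 ^ 3
    + c (vec4 0 0 2 1) * x 2 ^ 2 * x 3 + c (vec4 0 0 1 2) * x 2 * x 3 ^ 2
    + c (vec4 0 0 0 3) * x 3 ^ 3"
  unfolding form_eval_4_3_sum by (simp add: mons_4_3_list_def mon_eval_def prod_lessThan_4 algebra_simps)

lemma form_deriv_4_3_0: "form_deriv 4 3 c 0 x = 3 * c (vec4 3 0 0 0) * x 0 ^ 2
    + 2 * c (vec4 2 1 0 0) * x 0 * x 1 + 2 * c (vec4 2 0 1 0) * x 0 * x 2
    + 2 * c (vec4 2 0 0 1) * x 0 * x 3 + c (vec4 1 2 0 0) * x 1 ^ 2 + c (vec4 1 1 1 0) * x 1 * x 2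
    + c (vec4 1 1 0 1) * x 1 * x 3 + c (vec4 1 0 2 0) * x 2 ^ 2 + c (vec4 1 0 1 1) * x 2 * x 3
    + c (vec4 1 0 0 2) * x 3 ^ 2"
  unfolding form_deriv_4_3_sum by (simp add: mons_4_3_list_def prod_lessThan_4 algebra_simps)

lemma form_deriv_4_3_1: "form_deriv 4 3 c 1 x = c (vec4 2 1 0 0) * x 0 ^ 2
    + 2 * c (vec4 1 2 0 0) * x 0 * x 1 + c (vec4 1 1 1 0) * x 0 * x 2 + c (vec4 1 1 0 1) * x 0 * x 3
    + 3 * c (vec4 0 3 0 0) * x 1 ^ 2 + 2 * c (vec4 0 2 1 0) * x 1 * x 2
    + 2 * c (vec4 0 2 0 1) * x 1 * x 3 + c (vec4 0 1 2 0) * x 2 ^ 2 + c (vec4 0 1 1 1) * x 2 * x 3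
    + c (vec4 0 1 0 2) * x 3 ^ 2"
  unfolding form_deriv_4_3_sum by (simp add: mons_4_3_list_def prod_lessThan_4 algebra_simps)

lemma form_deriv_4_3_2: "form_deriv 4 3 c 2 x = c (vec4 2 0 1 0) * x 0 ^ 2
    + c (vec4 1 1 1 0) * x 0 * x 1 + 2 * c (vec4 1 0 2 0) * x 0 * x 2 + c (vec4 1 0 1 1) * x 0 * x 3
    + c (vec4 0 2 1 0) * x 1 ^ 2 + 2 * c (vec4 0 1 2 0) * x 1 * x 2 + c (vec4 0 1 1 1) * x 1 * x 3
    + 3 * c (vec4 0 0 3 0) * x 2 ^ 2 + 2 * c (vec4 0 0 2 1) * x 2 * x 3
    + c (vec4 0 0 1 2) * x 3 ^ 2"
  unfolding form_deriv_4_3_sum by (simp add: mons_4_3_list_def prod_lessThan_4 algebra_simps)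

lemma form_deriv_4_3_3: "form_deriv 4 3 c 3 x = c (vec4 2 0 0 1) * x 0 ^ 2
    + c (vec4 1 1 0 1) * x 0 * x 1 + c (vec4 1 0 1 1) * x 0 * x 2 + 2 * c (vec4 1 0 0 2) * x 0 * x 3
    + c (vec4 0 2 0 1) * x 1 ^ 2 + c (vec4 0 1 1 1) * x 1 * x 2 + 2 * c (vec4 0 1 0 2) * x 1 * x 3
    + c (vec4 0 0 2 1) * x 2 ^ 2 + 2 * c (vec4 0 0 1 2) * x 2 * x 3
    + 3 * c (vec4 0 0 0 3) * x 3 ^ 2"
  unfolding form_deriv_4_3_sum by (simp add: mons_4_3_list_def prod_lessThan_4 algebra_simps)

section \<open>The base point\<close>

definition F0 :: "(nat \<Rightarrow> nat) \<Rightarrow> complex" where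
  "F0 = (\<lambda>\<alpha>. if \<alpha> = vec4 3 0 0 0 then 1
    else if \<alpha> = vec4 1 2 0 0 then - 1 else if \<alpha> = vec4 1 0 2 0 then - 1
    else if \<alpha> = vec4 0 1 2 0 then 1 else if \<alpha> = vec4 0 1 0 2 then 1
    else if \<alpha> = vec4 0 0 1 2 then 1 else if \<alpha> = vec4 0 0 0 3 then 1 else 0)"

definition W0 :: "(nat \<Rightarrow> nat) \<Rightarrow> complex" where
  "W0 = (\<lambda>\<alpha>. if \<alpha> = vec5 3 0 0 0 0 then 1
    else if \<alpha> = vec5 1 2 0 0 0 then - 1 else if \<alpha> = vec5 1 0 2 0 0 then - 1
    else if \<alpha> = vec5 1 0 0 1 1 then - 1 else if \<alpha> = vec5 1 0 0 0 2 then - 1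
    else if \<alpha> = vec5 0 1 2 0 0 then 1 else if \<alpha> = vec5 0 1 1 0 1 then 1
    else if \<alpha> = vec5 0 1 0 2 0 then 1 else if \<alpha> = vec5 0 0 1 2 0 then 1
    else if \<alpha> = vec5 0 0 0 3 0 then 1 else 0)"

lemma F0_forms: "F0 \<in> forms 4 3"
  unfolding forms_def mons_4_3 F0_def by (auto simp: mons_4_3_list_def)

lemma W0_forms: "W0 \<in> forms 5 3"
  unfolding forms_def mons_5_3 range_cubic_mon W0_def by auto

lemma form_eval_F0:
  "form_eval 4 3 F0 x = x 0 ^ 3 - x 0 * x 1 ^ 2 - x 0 * x 2 ^ 2 + x 1 * x 2 ^ 2 + x 1 * x 3 ^ 2 + x 2 * x 3 ^ 2 + x 3 ^ 3"
  unfolding form_eval_4_3 F0_def by (simp add: algebra_simps)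

lemma form_deriv_F0_0: "form_deriv 4 3 F0 0 x = 3 * x 0 ^ 2 - x 1 ^ 2 - x 2 ^ 2"
  unfolding form_deriv_4_3_0 F0_def by (simp add: algebra_simps)

lemma form_deriv_F0_1: "form_deriv 4 3 F0 1 x = - 2 * x 0 * x 1 + x 2 ^ 2 + x 3 ^ 2"
  unfolding form_deriv_4_3_1 F0_def by (simp add: algebra_simps)

lemma form_deriv_F0_2: "form_deriv 4 3 F0 2 x = - 2 * x 0 * x 2 + 2 * x 1 * x 2 + x 3 ^ 2"
  unfolding form_deriv_4_3_2 F0_def by (simp add: algebra_simps)

lemma form_deriv_F0_3: "form_deriv 4 3 F0 3 x = 2 * x 1 * x 3 + 2 * x 2 * x 3 + 3 * x 3 ^ 2"
  unfolding form_deriv_4_3_3 F0_def by (simp add: algebra_simps)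

lemma form_deriv_W0_0: "form_deriv 5 3 W0 0 x = 3 * x 0 ^ 2 - x 1 ^ 2 - x 2 ^ 2 - x 3 * x 4 - x 4 ^ 2"
  unfolding form_deriv_5_3_0 W0_def by (simp add: algebra_simps)

lemma form_deriv_W0_1: "form_deriv 5 3 W0 1 x = - 2 * x 0 * x 1 + x 2 ^ 2 + x 2 * x 4 + x 3 ^ 2"
  unfolding form_deriv_5_3_1 W0_def by (simp add: algebra_simps)

lemma form_deriv_W0_2: "form_deriv 5 3 W0 2 x = - 2 * x 0 * x 2 + 2 * x 1 * x 2 + x 1 * x 4 + x 3 ^ 2"
  unfolding form_deriv_5_3_2 W0_def by (simp add: algebra_simps)

lemma form_deriv_W0_3: "form_deriv 5 3 W0 3 x = - x 0 * x 4 + 2 * x 1 * x 3 + 2 * x 2 * x 3 + 3 * x 3 ^ 2"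
  unfolding form_deriv_5_3_3 W0_def by (simp add: algebra_simps)

lemma form_deriv_W0_4: "form_deriv 5 3 W0 4 x = - x 0 * x 3 - 2 * x 0 * x 4 + x 1 * x 2"
  unfolding form_deriv_5_3_4 W0_def by (simp add: algebra_simps)

lemma form_eval_W0: "form_eval 5 3 W0 x = x 0 ^ 3 - x 0 * x 1 ^ 2 - x 0 * x 2 ^ 2 - x 0 * x 3 * x 4 - x 0 * x 4 ^ 2 + x 1 * x 2 ^ 2 + x 1 * x 2 * x 4 + x 1 * x 3 ^ 2 + x 2 * x 3 ^ 2 + x 3 ^ 3"
  unfolding form_eval_5_3 W0_def by (simp add: algebra_simps)

lemma Wform_F0_1: "Wform F0 1 x = form_eval 5 3 W0 x"
  unfolding Wform_def qQ_def form_eval_F0 form_eval_W0 by (simp add: algebra_simps power2_eq_square)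

context
  fixes x :: "nat \<Rightarrow> complex"
  assumes W0_critical:
    "3 * x 0 ^ 2 - x 1 ^ 2 - x 2 ^ 2 - x 3 * x 4 - x 4 ^ 2 = 0"
    "- 2 * x 0 * x 1 + x 2 ^ 2 + x 2 * x 4 + x 3 ^ 2 = 0"
    "- 2 * x 0 * x 2 + 2 * x 1 * x 2 + x 1 * x 4 + x 3 ^ 2 = 0"
    "- x 0 * x 4 + 2 * x 1 * x 3 + 2 * x 2 * x 3 + 3 * x 3 ^ 2 = 0"
    "- x 0 * x 3 - 2 * x 0 * x 4 + x 1 * x 2 = 0"
begin

lemma W0_critical_0: "x 0 ^ 6 = 0" using W0_critical by algebra
lemma W0_critical_1: "x 1 ^ 6 = 0" using W0_critical by algebra
lemma W0_critical_2: "x 2 ^ 6 = 0" using W0_critical by algebra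
lemma W0_critical_3: "x 3 ^ 6 = 0" using W0_critical by algebra
lemma W0_critical_4: "x 4 ^ 6 = 0" using W0_critical by algebra

end

lemma nonzero_vec_5_iff: "nonzero_vec 5 x \<longleftrightarrow> x 0 \<noteq> 0 \<or> x 1 \<noteq> 0 \<or> x 2 \<noteq> 0 \<or> x 3 \<noteq> 0 \<or> x 4 \<noteq> 0"
  unfolding nonzero_vec_def by (auto simp: less_Suc_eq eval_nat_numeral)

lemma nonzero_vec_4_iff: "nonzero_vec 4 x \<longleftrightarrow> x 0 \<noteq> 0 \<or> x 1 \<noteq> 0 \<or> x 2 \<noteq> 0 \<or> x 3 \<noteq> 0"
  unfolding nonzero_vec_def by (auto simp: less_Suc_eq eval_nat_numeral)

lemma smooth_form_W0: "smooth_form 5 3 W0"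
  unfolding smooth_form_def
proof (intro conjI W0_forms allI impI notI)
  fix x :: "nat \<Rightarrow> complex"
  assume nz: "nonzero_vec 5 x" and "\<forall>j<5. form_deriv 5 3 W0 j x = 0"
  then have "form_deriv 5 3 W0 0 x = 0" "form_deriv 5 3 W0 1 x = 0" "form_deriv 5 3 W0 2 x = 0"
     "form_deriv 5 3 W0 3 x = 0" "form_deriv 5 3 W0 4 x = 0" by auto
  note crit = this[unfolded form_deriv_W0_0 form_deriv_W0_1 form_deriv_W0_2 form_deriv_W0_3 form_deriv_W0_4]
  show False
    using W0_critical_0[OF crit] W0_critical_1[OF crit] W0_critical_2[OF crit] W0_critical_3[OF crit]
      W0_critical_4[OF crit] nz
    by (simp add: nonzero_vec_5_iff)
qed

context
  fixes x :: "nat \<Rightarrow> complex" and \<mu> :: complex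
  assumes F0_Q_singular:
    "x 0 ^ 3 - x 0 * x 1 ^ 2 - x 0 * x 2 ^ 2 + x 1 * x 2 ^ 2 + x 1 * x 3 ^ 2 + x 2 * x 3 ^ 2 + x 3 ^ 3 = 0"
    "x 0 * x 3 - x 1 * x 2 = 0"
    "3 * x 0 ^ 2 - x 1 ^ 2 - x 2 ^ 2 + \<mu> * x 3 = 0"
    "- 2 * x 0 * x 1 + x 2 ^ 2 + x 3 ^ 2 + \<mu> * (- x 2) = 0"
    "- 2 * x 0 * x 2 + 2 * x 1 * x 2 + x 3 ^ 2 + \<mu> * (- x 1) = 0"
    "2 * x 1 * x 3 + 2 * x 2 * x 3 + 3 * x 3 ^ 2 + \<mu> * x 0 = 0"
begin

lemma F0_Q_singular_0: "x 0 ^ 5 = 0" using F0_Q_singular by algebra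
lemma F0_Q_singular_1: "x 1 ^ 5 = 0" using F0_Q_singular by algebra
lemma F0_Q_singular_2: "x 2 ^ 5 = 0" using F0_Q_singular by algebra
lemma F0_Q_singular_3: "x 3 ^ 5 = 0" using F0_Q_singular by algebra

end

lemma qgrad_simps: "qgrad x 0 = x 3" "qgrad x 1 = - x 2" "qgrad x 2 = - x 1" "qgrad x 3 = x 0"
  by (simp_all add: qgrad_def)

lemma smooth_curve_on_Q_F0: "smooth_curve_on_Q F0"
  unfolding smooth_curve_on_Q_def
proof (intro allI impI notI)
  fix x :: "nat \<Rightarrow> complex"
  assume x: "nonzero_vec 4 x \<and> form_eval 4 3 F0 x = 0 \<and> qQ x = 0"
    and "\<exists>l m. (l, m) \<noteq> (0, 0) \<and> (\<forall>j<4. l * form_deriv 4 3 F0 j x + m * qgrad x j = 0)"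
  then obtain l m where lm: "(l, m) \<noteq> (0, 0)"
    and e: "\<And>j. j < 4 \<Longrightarrow> l * form_deriv 4 3 F0 j x + m * qgrad x j = 0"
    by blast
  have nz: "x 0 \<noteq> 0 \<or> x 1 \<noteq> 0 \<or> x 2 \<noteq> 0 \<or> x 3 \<noteq> 0" using x by (simp add: nonzero_vec_4_iff)
  show False
  proof (cases "l = 0")
    case True
    then show False using lm e[of 0] e[of 1] e[of 2] e[of 3] nz by (auto simp: qgrad_def)
  next
    case False
    define \<mu> where "\<mu> = m / l"
    have d: "form_deriv 4 3 F0 j x + \<mu> * qgrad x j = 0" if "j < 4" for j
      using e[OF that] False by (simp add: \<mu>_def field_simps)
    have "form_deriv 4 3 F0 0 x + \<mu> * qgrad x 0 = 0" "form_deriv 4 3 F0 1 x + \<mu> * qgrad x 1 = 0"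
      "form_deriv 4 3 F0 2 x + \<mu> * qgrad x 2 = 0" "form_deriv 4 3 F0 3 x + \<mu> * qgrad x 3 = 0"
      using d by simp_all
    note sing = x[THEN conjunct2, THEN conjunct1, unfolded form_eval_F0]
      x[THEN conjunct2, THEN conjunct2, unfolded qQ_def]
      this[unfolded form_deriv_F0_0 form_deriv_F0_1 form_deriv_F0_2 form_deriv_F0_3 qgrad_simps]
    have "x 0 ^ 5 = 0" "x 1 ^ 5 = 0" "x 2 ^ 5 = 0" "x 3 ^ 5 = 0"
      using F0_Q_singular_0[OF sing] F0_Q_singular_1[OF sing] F0_Q_singular_2[OF sing]
        F0_Q_singular_3[OF sing] by simp_all
    then show False using nz by simp
  qed
qed

section \<open>A 35-parameter deformation of the base point\<close>

text \<open>The parameters \<open>X1\<close>, ..., \<open>X13\<close> perturb the coefficients of \<open>F0\<close> at the monomials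
  that involve \<open>x0\<close> or both \<open>x1\<close> and \<open>x2\<close>. The remaining coefficients fix \<open>F\<close> on the two lines
  \<open>x0 = x1 = 0\<close> and \<open>x0 = x2 = 0\<close>, where it stays \<open>u\<^sup>2 (s + u)\<close>; so every \<open>F_par u\<close> satisfies
  the tangency and base point conditions of \<open>U0\<close>.\<close>

definition F_par :: "complex ^ cubic_index \<Rightarrow> (nat \<Rightarrow> nat) \<Rightarrow> complex" where
  "F_par u = (\<lambda>\<alpha>. F0 \<alpha> +
     (if \<alpha> = vec4 3 0 0 0 then u $ X1 else if \<alpha> = vec4 2 1 0 0 then u $ X2
      else if \<alpha> = vec4 2 0 1 0 then u $ X3 else if \<alpha> = vec4 2 0 0 1 then u $ X4
      else if \<alpha> = vec4 1 2 0 0 then u $ X5 else if \<alpha> = vec4 1 1 1 0 then u $ X6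
      else if \<alpha> = vec4 1 1 0 1 then u $ X7 else if \<alpha> = vec4 1 0 2 0 then u $ X8
      else if \<alpha> = vec4 1 0 1 1 then u $ X9 else if \<alpha> = vec4 1 0 0 2 then u $ X10
      else if \<alpha> = vec4 0 2 1 0 then u $ X11 else if \<alpha> = vec4 0 1 2 0 then u $ X12
      else if \<alpha> = vec4 0 1 1 1 then u $ X13 else 0))"

definition t_par :: "complex ^ cubic_index \<Rightarrow> complex" where
  "t_par u = 1 + u $ X0"

text \<open>The remaining 21 parameters are entries of a \<open>5 \<times> 5\<close> matrix; in the last row only the
  diagonal entry is used.\<close>

definition entry_index :: "nat \<Rightarrow> nat \<Rightarrow> cubic_index" where
  "entry_index i j =
     [[X14, X15, X16, X17, X18],
      [X19, X20, X21, X22, X23],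
      [X24, X25, X26, X27, X28],
      [X29, X30, X31, X32, X33],
      [X34, X34, X34, X34, X34]] ! i ! j"

definition N_par :: "complex ^ cubic_index \<Rightarrow> nat \<Rightarrow> nat \<Rightarrow> complex" where
  "N_par u i j = u $ entry_index i j"

definition S_diag :: "(nat \<times> nat) set" where "S_diag = {(i, j). i = j}"
definition S1 :: "(nat \<times> nat) set" where "S1 = {0, 1} \<times> {2, 3, 4}"
definition S2 :: "(nat \<times> nat) set" where "S2 = {2, 3} \<times> {0, 1, 4}"
definition S3 :: "(nat \<times> nat) set" where "S3 = {(0, 1), (2, 3)}"
definition S4 :: "(nat \<times> nat) set" where "S4 = {(1, 0), (3, 2)}"

text \<open>Each factor is invertible (the diagonal one for small \<open>u\<close>), and to first order the product
  is \<open>I + N_par u\<close>, since the supports cover each used entry exactly once.\<close>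

definition A_par :: "complex ^ cubic_index \<Rightarrow> nat \<Rightarrow> nat \<Rightarrow> complex" where
  "A_par u = mat_mult 5 (id_plus_on S_diag (N_par u)) (mat_mult 5 (id_plus_on S1 (N_par u))
     (mat_mult 5 (id_plus_on S2 (N_par u)) (mat_mult 5 (id_plus_on S3 (N_par u)) (id_plus_on S4 (N_par u)))))"

definition Phi :: "complex ^ cubic_index \<Rightarrow> (nat \<Rightarrow> complex) \<Rightarrow> complex" where
  "Phi u x = Wform (F_par u) (t_par u) (matvec 5 (A_par u) x)"

lemma is_form_cong: "is_form n d f \<Longrightarrow> (\<And>x. f x = g x) \<Longrightarrow> is_form n d g"
  by (metis ext)

lemma is_form_Wform:
  assumes F: "F \<in> forms 4 3"
  shows "is_form 5 3 (\<lambda>x. Wform F t (matvec 5 A x))"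
proof -
  let ?y = "\<lambda>x. matvec 5 A x"
  have y: "is_form 5 1 (\<lambda>x. ?y x i)" if "i < 5" for i
    unfolding matvec_def using that by (intro is_form_sum is_form_scale is_form_var) auto
  have fe: "is_form 5 3 (\<lambda>x. form_eval 4 3 F (?y x))"
    unfolding form_eval_def
  proof (intro is_form_sum is_form_scale)
    fix \<beta> assume b: "\<beta> \<in> mons 4 3"
    have "is_form 5 (\<Sum>i<4. \<beta> i * 1) (\<lambda>x. \<Prod>i<4. ?y x i ^ \<beta> i)"
      by (intro is_form_prod is_form_power y) auto
    moreover have "(\<Sum>i<4. \<beta> i * 1) = 3" using b by (simp add: mons_def)
    ultimately show "is_form 5 3 (\<lambda>x. \<Prod>i<4. ?y x i ^ \<beta> i)" by simp
  qed simp
  have cubic: "is_form 5 3 (\<lambda>x. ?y x i * ?y x j * ?y x k)" if "i < 5" "j < 5" "k < 5" for i j k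
    using is_form_mult[OF is_form_mult[OF y[OF that(1)] y[OF that(2)]] y[OF that(3)]]
    by (simp add: numeral_3_eq_3)
  have "is_form 5 3 (\<lambda>x. form_eval 4 3 F (?y x) + (-1) * (?y x 4 * ?y x 0 * ?y x 3)
      + 1 * (?y x 4 * ?y x 1 * ?y x 2) + (- t) * (?y x 0 * ?y x 4 * ?y x 4))"
    by (intro is_form_add is_form_scale fe cubic) simp_all
  then show ?thesis
    by (rule is_form_cong) (simp add: Wform_def qQ_def algebra_simps power2_eq_square)
qed

lemma F_par_forms: "F_par u \<in> forms 4 3"
  using F0_forms unfolding forms_def F_par_def mons_4_3 by (auto simp: mons_4_3_list_def)

lemma is_form_Phi: "is_form 5 3 (Phi u)"
  unfolding Phi_def[abs_def] by (rule is_form_Wform[OF F_par_forms])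

lemma invertible_A_par:
  assumes "\<And>i. i < 5 \<Longrightarrow> 1 + u $ entry_index i i \<noteq> 0"
  shows "invertible_mat 5 (A_par u)"
  unfolding A_par_def
proof (intro invertible_mat_mult)
  show "invertible_mat 5 (id_plus_on S_diag (N_par u))"
    by (rule invertible_id_plus_on_diagonal) (auto simp: S_diag_def N_par_def assms)
  show "invertible_mat 5 (id_plus_on S1 (N_par u))" "invertible_mat 5 (id_plus_on S2 (N_par u))"
    "invertible_mat 5 (id_plus_on S3 (N_par u))" "invertible_mat 5 (id_plus_on S4 (N_par u))"
    by (rule invertible_id_plus_on_square_zero; auto simp: S1_def S2_def S3_def S4_def)+
qed

lemma form_eval_F_par: "form_eval 4 3 (F_par u) x =
    (1 + u $ X1) * x 0 ^ 3 + u $ X2 * x 0 ^ 2 * x 1 + u $ X3 * x 0 ^ 2 * x 2 + u $ X4 * x 0 ^ 2 * x 3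
  + (u $ X5 - 1) * x 0 * x 1 ^ 2 + u $ X6 * x 0 * x 1 * x 2 + u $ X7 * x 0 * x 1 * x 3
  + (u $ X8 - 1) * x 0 * x 2 ^ 2 + u $ X9 * x 0 * x 2 * x 3 + u $ X10 * x 0 * x 3 ^ 2
  + u $ X11 * x 1 ^ 2 * x 2 + (1 + u $ X12) * x 1 * x 2 ^ 2 + u $ X13 * x 1 * x 2 * x 3
  + x 1 * x 3 ^ 2 + x 2 * x 3 ^ 2 + x 3 ^ 3"
  unfolding form_eval_4_3 F_par_def F0_def by (simp add: algebra_simps)

lemma F_par_in_U0:
  assumes "smooth_curve_on_Q (F_par u)"
  shows "F_par u \<in> U0"
  unfolding U0_def
proof (intro CollectI conjI F_par_forms assms)
  show "form_eval 4 3 (F_par u) (\<lambda>i. if i = 3 then 1 else 0) \<noteq> 0" by (simp add: form_eval_F_par)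
  show "tangent2 (F_par u) line1" "tangent2 (F_par u) line2"
    unfolding tangent2_def
    by (rule exI[of _ 0], rule exI[of _ 1], rule exI[of _ 1], rule exI[of _ 1],
        simp add: form_eval_F_par line1_def line2_def power2_eq_square power3_eq_cube algebra_simps)+
qed

section \<open>The differential of the deformation\<close>

text \<open>\<open>dPhi_basis p\<close> is the derivative of \<open>Phi\<close> at \<open>0\<close> in direction \<open>p\<close>: \<open>-x0 x4\<^sup>2\<close> for \<open>t\<close>,
  the perturbed monomial for \<open>X1\<close>, ..., \<open>X13\<close>, and \<open>x\<^sub>j \<partial>\<^sub>i W0\<close> for the matrix entry
  \<open>(i, j)\<close>.\<close>

primrec dPhi_basis :: "cubic_index \<Rightarrow> (nat \<Rightarrow> complex) \<Rightarrow> complex" where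
  "dPhi_basis X0 x = - (x 0 * x 4 ^ 2)"
| "dPhi_basis X1 x = x 0 ^ 3"
| "dPhi_basis X2 x = x 0 ^ 2 * x 1"
| "dPhi_basis X3 x = x 0 ^ 2 * x 2"
| "dPhi_basis X4 x = x 0 ^ 2 * x 3"
| "dPhi_basis X5 x = x 0 * x 1 ^ 2"
| "dPhi_basis X6 x = x 0 * x 1 * x 2"
| "dPhi_basis X7 x = x 0 * x 1 * x 3"
| "dPhi_basis X8 x = x 0 * x 2 ^ 2"
| "dPhi_basis X9 x = x 0 * x 2 * x 3"
| "dPhi_basis X10 x = x 0 * x 3 ^ 2"
| "dPhi_basis X11 x = x 1 ^ 2 * x 2"
| "dPhi_basis X12 x = x 1 * x 2 ^ 2"
| "dPhi_basis X13 x = x 1 * x 2 * x 3"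
| "dPhi_basis X14 x = x 0 * (3 * x 0 ^ 2 - x 1 ^ 2 - x 2 ^ 2 - x 3 * x 4 - x 4 ^ 2)"
| "dPhi_basis X15 x = x 1 * (3 * x 0 ^ 2 - x 1 ^ 2 - x 2 ^ 2 - x 3 * x 4 - x 4 ^ 2)"
| "dPhi_basis X16 x = x 2 * (3 * x 0 ^ 2 - x 1 ^ 2 - x 2 ^ 2 - x 3 * x 4 - x 4 ^ 2)"
| "dPhi_basis X17 x = x 3 * (3 * x 0 ^ 2 - x 1 ^ 2 - x 2 ^ 2 - x 3 * x 4 - x 4 ^ 2)"
| "dPhi_basis X18 x = x 4 * (3 * x 0 ^ 2 - x 1 ^ 2 - x 2 ^ 2 - x 3 * x 4 - x 4 ^ 2)"
| "dPhi_basis X19 x = x 0 * (- 2 * x 0 * x 1 + x 2 ^ 2 + x 2 * x 4 + x 3 ^ 2)"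
| "dPhi_basis X20 x = x 1 * (- 2 * x 0 * x 1 + x 2 ^ 2 + x 2 * x 4 + x 3 ^ 2)"
| "dPhi_basis X21 x = x 2 * (- 2 * x 0 * x 1 + x 2 ^ 2 + x 2 * x 4 + x 3 ^ 2)"
| "dPhi_basis X22 x = x 3 * (- 2 * x 0 * x 1 + x 2 ^ 2 + x 2 * x 4 + x 3 ^ 2)"
| "dPhi_basis X23 x = x 4 * (- 2 * x 0 * x 1 + x 2 ^ 2 + x 2 * x 4 + x 3 ^ 2)"
| "dPhi_basis X24 x = x 0 * (- 2 * x 0 * x 2 + 2 * x 1 * x 2 + x 1 * x 4 + x 3 ^ 2)"
| "dPhi_basis X25 x = x 1 * (- 2 * x 0 * x 2 + 2 * x 1 * x 2 + x 1 * x 4 + x 3 ^ 2)"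
| "dPhi_basis X26 x = x 2 * (- 2 * x 0 * x 2 + 2 * x 1 * x 2 + x 1 * x 4 + x 3 ^ 2)"
| "dPhi_basis X27 x = x 3 * (- 2 * x 0 * x 2 + 2 * x 1 * x 2 + x 1 * x 4 + x 3 ^ 2)"
| "dPhi_basis X28 x = x 4 * (- 2 * x 0 * x 2 + 2 * x 1 * x 2 + x 1 * x 4 + x 3 ^ 2)"
| "dPhi_basis X29 x = x 0 * (- x 0 * x 4 + 2 * x 1 * x 3 + 2 * x 2 * x 3 + 3 * x 3 ^ 2)"
| "dPhi_basis X30 x = x 1 * (- x 0 * x 4 + 2 * x 1 * x 3 + 2 * x 2 * x 3 + 3 * x 3 ^ 2)"
| "dPhi_basis X31 x = x 2 * (- x 0 * x 4 + 2 * x 1 * x 3 + 2 * x 2 * x 3 + 3 * x 3 ^ 2)"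
| "dPhi_basis X32 x = x 3 * (- x 0 * x 4 + 2 * x 1 * x 3 + 2 * x 2 * x 3 + 3 * x 3 ^ 2)"
| "dPhi_basis X33 x = x 4 * (- x 0 * x 4 + 2 * x 1 * x 3 + 2 * x 2 * x 3 + 3 * x 3 ^ 2)"
| "dPhi_basis X34 x = x 4 * (- x 0 * x 3 - 2 * x 0 * x 4 + x 1 * x 2)"

definition dPhi :: "complex ^ cubic_index \<Rightarrow> (nat \<Rightarrow> complex) \<Rightarrow> complex" where
  "dPhi v x = (\<Sum>p\<in>UNIV. v $ p * dPhi_basis p x)"

definition layer :: "(nat \<times> nat) set \<Rightarrow> complex ^ cubic_index \<Rightarrow> (nat \<Rightarrow> complex) \<Rightarrow> nat \<Rightarrow> complex" where
  "layer S u = matvec 5 (id_plus_on S (N_par u))"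

definition layers :: "(nat \<times> nat) set list \<Rightarrow> complex ^ cubic_index \<Rightarrow> (nat \<Rightarrow> complex) \<Rightarrow> nat \<Rightarrow> complex" where
  "layers Ss u = foldr (\<lambda>S. layer S u) Ss"

lemma Phi_layers: "Phi u x = Wform (F_par u) (t_par u) (layers [S_diag, S1, S2, S3, S4] u x)"
  by (simp add: Phi_def A_par_def matvec_mat_mult layers_def layer_def)

lemma layers_Nil [simp]: "layers [] u x = x"
  and layers_Cons [simp]: "layers (S # Ss) u x = layer S u (layers Ss u x)"
  by (simp_all add: layers_def)

lemma layer_component:
  "i < 5 \<Longrightarrow> layer S u y i = y i + (\<Sum>j<5. of_bool ((i, j) \<in> S) * u $ entry_index i j * y j)"
  by (simp add: layer_def matvec_id_plus_on N_par_def)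

lemma layers_0: "i < 5 \<Longrightarrow> layers Ss 0 x i = x i"
  by (induction Ss arbitrary: i) (simp_all add: layer_component)

lemma continuous_on_layers: "i < 5 \<Longrightarrow> continuous_on UNIV (\<lambda>u. layers Ss u x i)"
proof (induction Ss arbitrary: i)
  case (Cons S Ss)
  then show ?case
    unfolding layers_Cons layer_component[OF Cons.prems]
    by (intro continuous_intros) auto
qed simp

lemma has_derivative_layers:
  "i < 5 \<Longrightarrow> ((\<lambda>u. layers Ss u x i) has_derivative
      (\<lambda>v. \<Sum>S\<leftarrow>Ss. \<Sum>j<5. of_bool ((i, j) \<in> S) * v $ entry_index i j * x j)) (at 0)"
proof (induction Ss arbitrary: i)
  case (Cons S Ss)
  have "((\<lambda>u. layers Ss u x i + (\<Sum>j<5. of_bool ((i, j) \<in> S) * u $ entry_index i j * layers Ss u x j))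
     has_derivative (\<lambda>v. (\<Sum>S\<leftarrow>Ss. \<Sum>j<5. of_bool ((i, j) \<in> S) * v $ entry_index i j * x j)
       + (\<Sum>j<5. of_bool ((i, j) \<in> S) * 0 $ entry_index i j * (\<Sum>S\<leftarrow>Ss. \<Sum>k<5. of_bool ((j, k) \<in> S) * v $ entry_index j k * x k)
          + of_bool ((i, j) \<in> S) * v $ entry_index i j * layers Ss 0 x j))) (at 0)"
    by (intro has_derivative_add has_derivative_sum has_derivative_mult has_derivative_mult_right
        has_derivative_vec_nth Cons) auto
  moreover have "(\<Sum>j<5. of_bool ((i, j) \<in> S) * 0 $ entry_index i j * w j
          + of_bool ((i, j) \<in> S) * v $ entry_index i j * layers Ss 0 x j)
      = (\<Sum>j<5. of_bool ((i, j) \<in> S) * v $ entry_index i j * x j)" for v w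
    by (intro sum.cong) (simp_all add: layers_0)
  ultimately show ?case
    unfolding layers_Cons layer_component[OF Cons.prems] by (simp add: add.commute)
qed simp

lemma has_derivative_Phi: "((\<lambda>u. Phi u x) has_derivative (\<lambda>v. dPhi v x)) (at 0)"
proof -
  define Y where "Y u = layers [S_diag, S1, S2, S3, S4] u x" for u
  have Phi: "(\<lambda>u. Phi u x) = (\<lambda>u. Wform (F_par u) (t_par u) (Y u))"
    by (simp add: Phi_layers Y_def)
  have Y0: "Y 0 i = x i" if "i < 5" for i
    using that unfolding Y_def by (rule layers_0)
  have "(0::nat) < 5" "(1::nat) < 5" "(2::nat) < 5" "(3::nat) < 5" "(4::nat) < 5" by simp_all
  note dY = has_derivative_layers[where Ss="[S_diag, S1, S2, S3, S4]" and x=x, folded Y_def, OF this(1)]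
    has_derivative_layers[where Ss="[S_diag, S1, S2, S3, S4]" and x=x, folded Y_def, OF this(2)]
    has_derivative_layers[where Ss="[S_diag, S1, S2, S3, S4]" and x=x, folded Y_def, OF this(3)]
    has_derivative_layers[where Ss="[S_diag, S1, S2, S3, S4]" and x=x, folded Y_def, OF this(4)]
    has_derivative_layers[where Ss="[S_diag, S1, S2, S3, S4]" and x=x, folded Y_def, OF this(5)]
  show ?thesis
    unfolding Phi Wform_def form_eval_F_par qQ_def t_par_def
    apply (rule has_derivative_eq_rhs)
     apply (rule derivative_intros has_derivative_vec_nth dY)+
    apply (rule ext)
    apply (simp add: Y0 dPhi_def UNIV_cubic_index sum_lessThan_5 S_diag_def S1_def S2_def
        S3_def S4_def entry_index_def)
    apply (simp add: algebra_simps power2_eq_square)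
    done
qed

section \<open>The differential is onto\<close>

text \<open>Finite-difference formulas recovering the coefficient of each cubic monomial from values
  at points with coordinates in \<open>{-1, 0, 1}\<close>; they make coefficient extraction a finite
  linear combination of evaluations, which commutes with limits and derivatives.\<close>

primrec coeff_nodes :: "cubic_index \<Rightarrow> (complex \<times> (nat \<Rightarrow> complex)) list" where
  "coeff_nodes X0 = [(1, vec5 1 0 0 0 0)]"
| "coeff_nodes X1 = [(1 / 2, vec5 1 1 0 0 0), (-1 / 2, vec5 1 (-1) 0 0 0), (-1, vec5 0 1 0 0 0)]"
| "coeff_nodes X2 = [(1 / 2, vec5 1 0 1 0 0), (-1 / 2, vec5 1 0 (-1) 0 0), (-1, vec5 0 0 1 0 0)]"
| "coeff_nodes X3 = [(1 / 2, vec5 1 0 0 1 0), (-1 / 2, vec5 1 0 0 (-1) 0), (-1, vec5 0 0 0 1 0)]"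
| "coeff_nodes X4 = [(1 / 2, vec5 1 0 0 0 1), (-1 / 2, vec5 1 0 0 0 (-1)), (-1, vec5 0 0 0 0 1)]"
| "coeff_nodes X5 = [(1 / 2, vec5 1 1 0 0 0), (-1 / 2, vec5 (-1) 1 0 0 0), (-1, vec5 1 0 0 0 0)]"
| "coeff_nodes X6 = [(1, vec5 1 1 1 0 0), (-1, vec5 1 1 0 0 0), (-1, vec5 1 0 1 0 0),
    (-1, vec5 0 1 1 0 0), (1, vec5 1 0 0 0 0), (1, vec5 0 1 0 0 0), (1, vec5 0 0 1 0 0)]"
| "coeff_nodes X7 = [(1, vec5 1 1 0 1 0), (-1, vec5 1 1 0 0 0), (-1, vec5 1 0 0 1 0),
    (-1, vec5 0 1 0 1 0), (1, vec5 1 0 0 0 0), (1, vec5 0 1 0 0 0), (1, vec5 0 0 0 1 0)]"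
| "coeff_nodes X8 = [(1, vec5 1 1 0 0 1), (-1, vec5 1 1 0 0 0), (-1, vec5 1 0 0 0 1),
    (-1, vec5 0 1 0 0 1), (1, vec5 1 0 0 0 0), (1, vec5 0 1 0 0 0), (1, vec5 0 0 0 0 1)]"
| "coeff_nodes X9 = [(1 / 2, vec5 1 0 1 0 0), (-1 / 2, vec5 (-1) 0 1 0 0), (-1, vec5 1 0 0 0 0)]"
| "coeff_nodes X10 = [(1, vec5 1 0 1 1 0), (-1, vec5 1 0 1 0 0), (-1, vec5 1 0 0 1 0),
    (-1, vec5 0 0 1 1 0), (1, vec5 1 0 0 0 0), (1, vec5 0 0 1 0 0), (1, vec5 0 0 0 1 0)]"
| "coeff_nodes X11 = [(1, vec5 1 0 1 0 1), (-1, vec5 1 0 1 0 0), (-1, vec5 1 0 0 0 1),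
    (-1, vec5 0 0 1 0 1), (1, vec5 1 0 0 0 0), (1, vec5 0 0 1 0 0), (1, vec5 0 0 0 0 1)]"
| "coeff_nodes X12 = [(1 / 2, vec5 1 0 0 1 0), (-1 / 2, vec5 (-1) 0 0 1 0), (-1, vec5 1 0 0 0 0)]"
| "coeff_nodes X13 = [(1, vec5 1 0 0 1 1), (-1, vec5 1 0 0 1 0), (-1, vec5 1 0 0 0 1),
    (-1, vec5 0 0 0 1 1), (1, vec5 1 0 0 0 0), (1, vec5 0 0 0 1 0), (1, vec5 0 0 0 0 1)]"
| "coeff_nodes X14 = [(1 / 2, vec5 1 0 0 0 1), (-1 / 2, vec5 (-1) 0 0 0 1), (-1, vec5 1 0 0 0 0)]"
| "coeff_nodes X15 = [(1, vec5 0 1 0 0 0)]"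
| "coeff_nodes X16 = [(1 / 2, vec5 0 1 1 0 0), (-1 / 2, vec5 0 1 (-1) 0 0), (-1, vec5 0 0 1 0 0)]"
| "coeff_nodes X17 = [(1 / 2, vec5 0 1 0 1 0), (-1 / 2, vec5 0 1 0 (-1) 0), (-1, vec5 0 0 0 1 0)]"
| "coeff_nodes X18 = [(1 / 2, vec5 0 1 0 0 1), (-1 / 2, vec5 0 1 0 0 (-1)), (-1, vec5 0 0 0 0 1)]"
| "coeff_nodes X19 = [(1 / 2, vec5 0 1 1 0 0), (-1 / 2, vec5 0 (-1) 1 0 0), (-1, vec5 0 1 0 0 0)]"
| "coeff_nodes X20 = [(1, vec5 0 1 1 1 0), (-1, vec5 0 1 1 0 0), (-1, vec5 0 1 0 1 0),
    (-1, vec5 0 0 1 1 0), (1, vec5 0 1 0 0 0), (1, vec5 0 0 1 0 0), (1, vec5 0 0 0 1 0)]"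
| "coeff_nodes X21 = [(1, vec5 0 1 1 0 1), (-1, vec5 0 1 1 0 0), (-1, vec5 0 1 0 0 1),
    (-1, vec5 0 0 1 0 1), (1, vec5 0 1 0 0 0), (1, vec5 0 0 1 0 0), (1, vec5 0 0 0 0 1)]"
| "coeff_nodes X22 = [(1 / 2, vec5 0 1 0 1 0), (-1 / 2, vec5 0 (-1) 0 1 0), (-1, vec5 0 1 0 0 0)]"
| "coeff_nodes X23 = [(1, vec5 0 1 0 1 1), (-1, vec5 0 1 0 1 0), (-1, vec5 0 1 0 0 1),
    (-1, vec5 0 0 0 1 1), (1, vec5 0 1 0 0 0), (1, vec5 0 0 0 1 0), (1, vec5 0 0 0 0 1)]"
| "coeff_nodes X24 = [(1 / 2, vec5 0 1 0 0 1), (-1 / 2, vec5 0 (-1) 0 0 1), (-1, vec5 0 1 0 0 0)]"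
| "coeff_nodes X25 = [(1, vec5 0 0 1 0 0)]"
| "coeff_nodes X26 = [(1 / 2, vec5 0 0 1 1 0), (-1 / 2, vec5 0 0 1 (-1) 0), (-1, vec5 0 0 0 1 0)]"
| "coeff_nodes X27 = [(1 / 2, vec5 0 0 1 0 1), (-1 / 2, vec5 0 0 1 0 (-1)), (-1, vec5 0 0 0 0 1)]"
| "coeff_nodes X28 = [(1 / 2, vec5 0 0 1 1 0), (-1 / 2, vec5 0 0 (-1) 1 0), (-1, vec5 0 0 1 0 0)]"
| "coeff_nodes X29 = [(1, vec5 0 0 1 1 1), (-1, vec5 0 0 1 1 0), (-1, vec5 0 0 1 0 1),
    (-1, vec5 0 0 0 1 1), (1, vec5 0 0 1 0 0), (1, vec5 0 0 0 1 0), (1, vec5 0 0 0 0 1)]"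
| "coeff_nodes X30 = [(1 / 2, vec5 0 0 1 0 1), (-1 / 2, vec5 0 0 (-1) 0 1), (-1, vec5 0 0 1 0 0)]"
| "coeff_nodes X31 = [(1, vec5 0 0 0 1 0)]"
| "coeff_nodes X32 = [(1 / 2, vec5 0 0 0 1 1), (-1 / 2, vec5 0 0 0 1 (-1)), (-1, vec5 0 0 0 0 1)]"
| "coeff_nodes X33 = [(1 / 2, vec5 0 0 0 1 1), (-1 / 2, vec5 0 0 0 (-1) 1), (-1, vec5 0 0 0 1 0)]"
| "coeff_nodes X34 = [(1, vec5 0 0 0 0 1)]"

definition coeff_extract :: "cubic_index \<Rightarrow> ((nat \<Rightarrow> complex) \<Rightarrow> complex) \<Rightarrow> complex" where
  "coeff_extract m g = (\<Sum>(r, Q)\<leftarrow>coeff_nodes m. r * g Q)"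

lemma coeff_extract_form_eval: "coeff_extract m (form_eval 5 3 c) = c (cubic_mon m)"
  unfolding coeff_extract_def form_eval_5_3 by (cases m) (simp_all add: field_simps)

lemma sum_list_weighted_sum:
  fixes L :: "(complex \<times> 'b) list"
  shows "(\<Sum>(r, Q)\<leftarrow>L. r * (\<Sum>k\<in>S. a k * h k Q)) = (\<Sum>k\<in>S. a k * (\<Sum>(r, Q)\<leftarrow>L. r * h k Q))"
  by (induction L) (auto simp: sum_distrib_left sum.distrib algebra_simps)

lemma coeff_extract_linear:
  "coeff_extract m (\<lambda>x. \<Sum>k\<in>S. a k * h k x) = (\<Sum>k\<in>S. a k * coeff_extract m (h k))"
  unfolding coeff_extract_def by (rule sum_list_weighted_sum)

lemma coeff_extract_mon_eval: "coeff_extract m' (mon_eval 5 (cubic_mon m)) = of_bool (m' = m)"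
proof -
  define c where "c = (\<lambda>\<alpha>. of_bool (\<alpha> = cubic_mon m) :: complex)"
  have "form_eval 5 3 c x = mon_eval 5 (cubic_mon m) x" for x
  proof -
    have "form_eval 5 3 c x = (\<Sum>m''\<in>UNIV. if m'' = m then mon_eval 5 (cubic_mon m) x else 0)"
      unfolding form_eval_5_3_sum c_def by (rule sum.cong) (auto simp: inj_eq[OF inj_cubic_mon])
    then show ?thesis by simp
  qed
  then have "form_eval 5 3 c = mon_eval 5 (cubic_mon m)" by auto
  then show ?thesis
    using coeff_extract_form_eval[of m' c] by (simp add: c_def inj_eq[OF inj_cubic_mon])
qed

text \<open>The rows of a right inverse of the differential, found by linear algebra: row \<open>m\<close>
  expresses the monomial \<open>cubic_mon m\<close> in terms of the \<open>dPhi_basis\<close> functions.\<close>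

primrec dPhi_inv_row :: "cubic_index \<Rightarrow> (complex \<times> cubic_index) list" where
  "dPhi_inv_row X0 = [(1, X1)]"
| "dPhi_inv_row X1 = [(1, X2)]"
| "dPhi_inv_row X2 = [(1, X3)]"
| "dPhi_inv_row X3 = [(1, X4)]"
| "dPhi_inv_row X4 = [(2, X7), (2, X9), (3, X10), (-1, X29)]"
| "dPhi_inv_row X5 = [(1, X5)]"
| "dPhi_inv_row X6 = [(1, X6)]"
| "dPhi_inv_row X7 = [(1, X7)]"
| "dPhi_inv_row X8 = [(2, X3), (-2, X6), (-1, X10), (1, X24)]"
| "dPhi_inv_row X9 = [(1, X8)]"
| "dPhi_inv_row X10 = [(1, X9)]"
| "dPhi_inv_row X11 = [(2, X2), (-1, X8), (-1, X10), (1, X19)]"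
| "dPhi_inv_row X12 = [(1, X10)]"
| "dPhi_inv_row X13 = [(1, X0), (3, X1), (-1, X5), (-1, X8), (-1, X14)]"
| "dPhi_inv_row X14 = [(-1, X0)]"
| "dPhi_inv_row X15 = [(-17 / 3, X0), (62 / 3, X1), (-1 / 3, X2), (-10, X5), (-4 / 3, X7),
    (-31 / 3, X8), (-10 / 3, X9), (5 / 3, X10), (17 / 3, X12), (8 / 3, X13), (-62 / 9, X14),
    (-1, X15), (-5 / 3, X19), (-14 / 9, X20), (-2 / 3, X22), (-23 / 9, X26), (-5 / 3, X27),
    (-1, X28), (1 / 3, X31), (7 / 9, X32), (1 / 3, X33), (55 / 9, X34)]"
| "dPhi_inv_row X16 = [(1, X11)]"
| "dPhi_inv_row X17 = [(-3 / 2, X0), (9 / 2, X1), (1, X3), (-9 / 2, X5), (-1, X6), (-3 / 2, X8),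
    (-1 / 2, X10), (3 / 2, X12), (-1, X13), (-3 / 2, X14), (-3 / 2, X20), (1 / 2, X24),
    (1 / 2, X30), (3 / 2, X34)]"
| "dPhi_inv_row X18 = [(-1, X0), (3, X1), (-3, X5), (2, X6), (-1, X8), (-2, X11), (1, X12),
    (-1, X14), (-1, X20), (1, X25), (1, X34)]"
| "dPhi_inv_row X19 = [(1, X12)]"
| "dPhi_inv_row X20 = [(1, X13)]"
| "dPhi_inv_row X21 = [(-1, X0), (3, X1), (-1, X5), (-1, X8), (-1, X14), (1, X34)]"
| "dPhi_inv_row X22 = [(1, X0), (-3, X1), (3, X5), (1, X8), (-1, X12), (1, X14), (1, X20),
    (-1, X34)]"
| "dPhi_inv_row X23 = [(1, X0), (-5, X1), (3, X5), (3, X8), (2, X9), (-2, X12), (-2, X13),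
    (5 / 3, X14), (2 / 3, X20), (2 / 3, X26), (1, X27), (-1 / 3, X32), (-4 / 3, X34)]"
| "dPhi_inv_row X24 = [(14 / 3, X0), (-47 / 3, X1), (10 / 3, X2), (7, X5), (4 / 3, X7),
    (22 / 3, X8), (4 / 3, X9), (-5 / 3, X10), (-14 / 3, X12), (-2 / 3, X13), (47 / 9, X14),
    (5 / 3, X19), (8 / 9, X20), (2 / 3, X22), (17 / 9, X26), (2 / 3, X27), (1, X28), (-1 / 3, X31),
    (-4 / 9, X32), (-1 / 3, X33), (-43 / 9, X34)]"
| "dPhi_inv_row X25 = [(-37 / 12, X0), (133 / 12, X1), (5 / 6, X2), (-1 / 2, X3), (-21 / 4, X5),
    (3, X6), (-5 / 3, X7), (-55 / 6, X8), (-2 / 3, X9), (7 / 12, X10), (-1 / 2, X11),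
    (35 / 6, X12), (-1 / 6, X13), (-133 / 36, X14), (-1 / 2, X16), (5 / 12, X19), (-7 / 9, X20),
    (1 / 2, X21), (-5 / 6, X22), (-1 / 2, X23), (-1, X24), (-91 / 36, X26), (-1 / 3, X27),
    (5 / 12, X31), (7 / 18, X32), (1 / 6, X33), (119 / 36, X34)]"
| "dPhi_inv_row X26 = [(-3 / 2, X0), (9 / 2, X1), (1, X2), (-3 / 2, X5), (-5, X8), (-1 / 2, X10),
    (3, X12), (-1, X13), (-3 / 2, X14), (1 / 2, X19), (-3 / 2, X26), (1 / 2, X31), (3 / 2, X34)]"
| "dPhi_inv_row X27 = [(25 / 12, X0), (-97 / 12, X1), (-5 / 6, X2), (1 / 2, X3), (17 / 4, X5),
    (-1, X6), (5 / 3, X7), (37 / 6, X8), (2 / 3, X9), (-7 / 12, X10), (1 / 2, X11), (-23 / 6, X12),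
    (1 / 6, X13), (97 / 36, X14), (1 / 2, X16), (-5 / 12, X19), (7 / 9, X20), (1 / 2, X21),
    (5 / 6, X22), (1 / 2, X23), (1, X24), (55 / 36, X26), (1 / 3, X27), (-5 / 12, X31),
    (-7 / 18, X32), (-1 / 6, X33), (-83 / 36, X34)]"
| "dPhi_inv_row X28 = [(1, X0), (-3, X1), (1, X5), (3, X8), (-2, X12), (1, X14), (1, X26),
    (-1, X34)]"
| "dPhi_inv_row X29 = [(5 / 2, X0), (-19 / 2, X1), (-1, X2), (9 / 2, X5), (2, X7), (8, X8),
    (1 / 2, X10), (-5, X12), (1, X13), (19 / 6, X14), (-1 / 2, X19), (2 / 3, X20), (1, X22),
    (13 / 6, X26), (-1 / 2, X31), (-1 / 3, X32), (-17 / 6, X34)]"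
| "dPhi_inv_row X30 = [(7 / 12, X0), (-19 / 12, X1), (1 / 6, X2), (7 / 2, X3), (3 / 4, X5),
    (-3, X6), (-1 / 3, X7), (7 / 6, X8), (2 / 3, X9), (-13 / 12, X10), (-1 / 2, X11),
    (-5 / 6, X12), (-5 / 6, X13), (19 / 36, X14), (-1 / 2, X16), (1 / 12, X19), (1 / 9, X20),
    (-1 / 2, X21), (-1 / 6, X22), (1 / 2, X23), (1, X24), (13 / 36, X26), (1 / 3, X27),
    (1 / 12, X31), (-1 / 18, X32), (-1 / 6, X33), (-17 / 36, X34)]"
| "dPhi_inv_row X31 = [(-1, X0), (5, X1), (-3, X5), (-3, X8), (2, X12), (-5 / 3, X14),
    (-2 / 3, X20), (-2 / 3, X26), (1 / 3, X32), (4 / 3, X34)]"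
| "dPhi_inv_row X32 = [(-8 / 3, X0), (29 / 3, X1), (2 / 3, X2), (-5, X5), (-4 / 3, X7),
    (-22 / 3, X8), (-4 / 3, X9), (-1 / 3, X10), (14 / 3, X12), (2 / 3, X13), (-29 / 9, X14),
    (1 / 3, X19), (-8 / 9, X20), (-2 / 3, X22), (-17 / 9, X26), (-2 / 3, X27), (1 / 3, X31),
    (4 / 9, X32), (1 / 3, X33), (25 / 9, X34)]"
| "dPhi_inv_row X33 = [(17 / 3, X0), (-56 / 3, X1), (-5 / 3, X2), (-1, X3), (3, X4), (11, X5),
    (1, X6), (4 / 3, X7), (83 / 6, X8), (4 / 3, X9), (4 / 3, X10), (-55 / 6, X12), (4 / 3, X13),
    (56 / 9, X14), (-1, X17), (-5 / 6, X19), (43 / 18, X20), (2 / 3, X22), (-1 / 2, X24),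
    (61 / 18, X26), (2 / 3, X27), (-1 / 2, X30), (-5 / 6, X31), (-4 / 9, X32), (-1 / 3, X33),
    (-52 / 9, X34)]"
| "dPhi_inv_row X34 = [(-27 / 4, X0), (95 / 4, X1), (5 / 2, X2), (1 / 2, X3), (-3, X4),
    (-49 / 4, X5), (-2, X6), (3, X7), (-19, X8), (4, X9), (33 / 4, X10), (3 / 2, X11), (12, X12),
    (-3 / 2, X13), (-95 / 12, X14), (-1 / 2, X16), (1, X17), (-1, X18), (5 / 4, X19),
    (-13 / 6, X20), (-1 / 2, X21), (-3 / 2, X22), (-1 / 2, X23), (-1 / 2, X24), (-1, X25),
    (-59 / 12, X26), (-1, X27), (-3, X29), (1 / 2, X30), (5 / 4, X31), (5 / 6, X32), (1 / 2, X33),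
    (85 / 12, X34)]"

definition dPhi_inv :: "cubic_index \<Rightarrow> cubic_index \<Rightarrow> complex" where
  "dPhi_inv m p = (\<Sum>(r, q)\<leftarrow>dPhi_inv_row m. if q = p then r else 0)"

lemma sum_UNIV_sparse_row:
  fixes L :: "(complex \<times> 'a::finite) list"
  shows "(\<Sum>p\<in>UNIV. (\<Sum>(r, q)\<leftarrow>L. if q = p then r else 0) * f p) = (\<Sum>(r, q)\<leftarrow>L. r * f q)"
  by (induction L) (auto simp: distrib_right sum.distrib if_distrib[of "\<lambda>z. z * f _"] cong: if_cong)

lemma dPhi_inv_basis: "(\<Sum>p\<in>UNIV. dPhi_inv m p * dPhi_basis p x) = mon_eval 5 (cubic_mon m) x"
  unfolding dPhi_inv_def sum_UNIV_sparse_row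
  by (cases m) (simp_all add: mon_eval_def prod_lessThan_5 field_simps power2_eq_square power3_eq_cube)

definition Phi_coeffs :: "complex ^ cubic_index \<Rightarrow> complex ^ cubic_index" where
  "Phi_coeffs u = (\<chi> m. coeff_extract m (Phi u))"

definition dPhi_coeffs :: "complex ^ cubic_index \<Rightarrow> complex ^ cubic_index" where
  "dPhi_coeffs v = (\<chi> m. coeff_extract m (dPhi v))"

definition dPhi_right_inv :: "complex ^ cubic_index \<Rightarrow> complex ^ cubic_index" where
  "dPhi_right_inv w = (\<chi> p. \<Sum>m\<in>UNIV. w $ m * dPhi_inv m p)"

lemma dPhi_coeffs_right_inv: "dPhi_coeffs (dPhi_right_inv w) = w"
proof -
  have D: "dPhi (dPhi_right_inv w) = (\<lambda>x. \<Sum>m\<in>UNIV. w $ m * mon_eval 5 (cubic_mon m) x)"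
  proof
    fix x
    have "dPhi (dPhi_right_inv w) x = (\<Sum>p\<in>UNIV. \<Sum>m\<in>UNIV. w $ m * (dPhi_inv m p * dPhi_basis p x))"
      by (simp add: dPhi_def dPhi_right_inv_def sum_distrib_right mult.assoc)
    also have "\<dots> = (\<Sum>m\<in>UNIV. w $ m * (\<Sum>p\<in>UNIV. dPhi_inv m p * dPhi_basis p x))"
      by (subst sum.swap) (simp add: sum_distrib_left)
    also have "\<dots> = (\<Sum>m\<in>UNIV. w $ m * mon_eval 5 (cubic_mon m) x)" by (simp add: dPhi_inv_basis)
    finally show "dPhi (dPhi_right_inv w) x = (\<Sum>m\<in>UNIV. w $ m * mon_eval 5 (cubic_mon m) x)" .
  qed
  show ?thesis
    unfolding vec_eq_iff
  proof
    fix m'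
    have "dPhi_coeffs (dPhi_right_inv w) $ m' = (\<Sum>m\<in>UNIV. w $ m * coeff_extract m' (mon_eval 5 (cubic_mon m)))"
      by (simp add: dPhi_coeffs_def D coeff_extract_linear)
    also have "\<dots> = (\<Sum>m\<in>UNIV. if m = m' then w $ m else 0)"
      by (rule sum.cong) (auto simp: coeff_extract_mon_eval)
    also have "\<dots> = w $ m'" by simp
    finally show "dPhi_coeffs (dPhi_right_inv w) $ m' = w $ m'" .
  qed
qed

lemma bounded_linear_dPhi_right_inv: "bounded_linear dPhi_right_inv"
proof -
  have "linear dPhi_right_inv"
    by (rule linearI)
      (simp_all add: dPhi_right_inv_def vec_eq_iff distrib_right sum.distrib scaleR_sum_right)
  then show ?thesis by (simp add: linear_conv_bounded_linear)
qed

lemma has_derivative_weighted_sum_list: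
  assumes "\<And>Q. ((\<lambda>u. G u Q) has_derivative G' Q) F"
  shows "((\<lambda>u. \<Sum>(r, Q)\<leftarrow>L. r * G u Q :: complex) has_derivative (\<lambda>v. \<Sum>(r, Q)\<leftarrow>L. r * G' Q v)) F"
  by (induction L) (auto intro!: derivative_eq_intros assms)

lemma continuous_on_weighted_sum_list:
  assumes "\<And>Q. continuous_on S (\<lambda>u. G u Q)"
  shows "continuous_on S (\<lambda>u. \<Sum>(r, Q)\<leftarrow>L. r * G u Q :: complex)"
  by (induction L) (auto intro!: continuous_intros assms)

lemma has_derivative_Phi_coeffs: "(Phi_coeffs has_derivative dPhi_coeffs) (at 0)"
  unfolding Phi_coeffs_def dPhi_coeffs_def coeff_extract_def
  by (intro has_derivative_vecI) (simp, rule has_derivative_weighted_sum_list[OF has_derivative_Phi])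

lemma continuous_on_Phi: "continuous_on UNIV (\<lambda>u. Phi u x)"
  unfolding Phi_layers Wform_def form_eval_F_par qQ_def t_par_def
  by (intro continuous_intros continuous_on_layers) simp_all

lemma continuous_on_Phi_coeffs: "continuous_on UNIV Phi_coeffs"
  unfolding Phi_coeffs_def coeff_extract_def
  by (intro continuous_on_vec_lambda continuous_on_weighted_sum_list continuous_on_Phi)

lemma Phi_coeffs_covers_ball:
  assumes "\<delta> > 0"
  obtains \<epsilon> where "\<epsilon> > 0" "ball (Phi_coeffs 0) \<epsilon> \<subseteq> Phi_coeffs ` ball 0 \<delta>"
proof -
  have "Phi_coeffs 0 \<in> interior (Phi_coeffs ` ball 0 \<delta>)"
    by (rule sussmann_open_mapping[where S=UNIV and f'=dPhi_coeffs and g'=dPhi_right_inv])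
      (auto simp: continuous_on_Phi_coeffs has_derivative_Phi_coeffs bounded_linear_dPhi_right_inv
        dPhi_coeffs_right_inv fun_eq_iff assms)
  then show ?thesis using that by (meson mem_interior)
qed

section \<open>Smoothness is an open condition\<close>

text \<open>Points of \<open>\<complex>\<^sup>5\<close> and \<open>\<complex>\<^sup>4\<close> are encoded as nested pairs, so that their unit spheres are
  compact and homogeneity reduces (non)vanishing statements to them.\<close>

definition of_tuple5 :: "complex \<times> complex \<times> complex \<times> complex \<times> complex \<Rightarrow> nat \<Rightarrow> complex" where
  "of_tuple5 = (\<lambda>(a, b, c, d, e). vec5 a b c d e)"

definition tuple5 :: "(nat \<Rightarrow> complex) \<Rightarrow> complex \<times> complex \<times> complex \<times> complex \<times> complex" where
  "tuple5 x = (x 0, x 1, x 2, x 3, x 4)"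

definition of_tuple4 :: "complex \<times> complex \<times> complex \<times> complex \<Rightarrow> nat \<Rightarrow> complex" where
  "of_tuple4 = (\<lambda>(a, b, c, d). vec4 a b c d)"

definition tuple4 :: "(nat \<Rightarrow> complex) \<Rightarrow> complex \<times> complex \<times> complex \<times> complex" where
  "tuple4 x = (x 0, x 1, x 2, x 3)"

lemma of_tuple5_scaleR: "i < 5 \<Longrightarrow> of_tuple5 (s *\<^sub>R tuple5 x) i = complex_of_real s * x i"
  by (auto simp: of_tuple5_def tuple5_def vec5_def less_Suc_eq eval_nat_numeral scaleR_conv_of_real)

lemma of_tuple4_scaleR: "i < 4 \<Longrightarrow> of_tuple4 (s *\<^sub>R tuple4 x) i = complex_of_real s * x i"
  by (auto simp: of_tuple4_def tuple4_def vec5_def less_Suc_eq eval_nat_numeral scaleR_conv_of_real)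

lemma tuple5_eq_0_iff: "tuple5 x = 0 \<longleftrightarrow> \<not> nonzero_vec 5 x"
  by (auto simp: tuple5_def nonzero_vec_5_iff zero_prod_def)

lemma tuple4_eq_0_iff: "tuple4 x = 0 \<longleftrightarrow> \<not> nonzero_vec 4 x"
  by (auto simp: tuple4_def nonzero_vec_4_iff zero_prod_def)

lemma nonzero_vec_of_tuple5: "y \<noteq> 0 \<Longrightarrow> nonzero_vec 5 (of_tuple5 y)"
  by (cases y) (auto simp: of_tuple5_def nonzero_vec_5_iff zero_prod_def)

lemma nonzero_vec_of_tuple4: "y \<noteq> 0 \<Longrightarrow> nonzero_vec 4 (of_tuple4 y)"
  by (cases y) (auto simp: of_tuple4_def nonzero_vec_4_iff zero_prod_def)

definition grad_norm2 :: "((nat \<Rightarrow> nat) \<Rightarrow> complex) \<Rightarrow> complex \<times> complex \<times> complex \<times> complex \<times> complex \<Rightarrow> real" where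
  "grad_norm2 c y = (\<Sum>j<5. (cmod (form_deriv 5 3 c j (of_tuple5 y)))\<^sup>2)"

lemma grad_norm2_eq_0_iff: "grad_norm2 c y = 0 \<longleftrightarrow> (\<forall>j<5. form_deriv 5 3 c j (of_tuple5 y) = 0)"
  unfolding grad_norm2_def by (subst sum_nonneg_eq_0_iff) auto

lemma smooth_form_5_3_iff_grad_norm2:
  assumes "c \<in> forms 5 3"
  shows "smooth_form 5 3 c \<longleftrightarrow> (\<forall>y\<in>sphere 0 1. grad_norm2 c y \<noteq> 0)"
proof
  assume smooth: "smooth_form 5 3 c"
  show "\<forall>y\<in>sphere 0 1. grad_norm2 c y \<noteq> 0"
  proof
    fix y :: "complex \<times> complex \<times> complex \<times> complex \<times> complex" assume "y \<in> sphere 0 1"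
    then have "nonzero_vec 5 (of_tuple5 y)" by (intro nonzero_vec_of_tuple5) auto
    then show "grad_norm2 c y \<noteq> 0" using smooth unfolding smooth_form_def grad_norm2_eq_0_iff by blast
  qed
next
  assume sphere: "\<forall>y\<in>sphere 0 1. grad_norm2 c y \<noteq> 0"
  show "smooth_form 5 3 c"
    unfolding smooth_form_def
  proof (intro conjI assms allI impI notI)
    fix x assume "nonzero_vec 5 x" and crit: "\<forall>j<5. form_deriv 5 3 c j x = 0"
    define s where "s = 1 / norm (tuple5 x)"
    have "s *\<^sub>R tuple5 x \<in> sphere 0 1"
      using \<open>nonzero_vec 5 x\<close> by (simp add: s_def tuple5_eq_0_iff)
    moreover have "grad_norm2 c (s *\<^sub>R tuple5 x) = 0"
      unfolding grad_norm2_eq_0_iff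
    proof (intro allI impI)
      fix j :: nat assume "j < 5"
      have "form_deriv 5 3 c j (of_tuple5 (s *\<^sub>R tuple5 x)) = form_deriv 5 3 c j (\<lambda>i. complex_of_real s * x i)"
        by (rule form_deriv_cong) (simp add: of_tuple5_scaleR)
      then show "form_deriv 5 3 c j (of_tuple5 (s *\<^sub>R tuple5 x)) = 0"
        using crit \<open>j < 5\<close> by (simp add: form_deriv_homogeneous)
    qed
    ultimately show False using sphere by blast
  qed
qed

definition on_line :: "((nat \<Rightarrow> nat) \<Rightarrow> complex) \<Rightarrow> ((nat \<Rightarrow> nat) \<Rightarrow> complex) \<Rightarrow> complex \<Rightarrow> (nat \<Rightarrow> nat) \<Rightarrow> complex" where
  "on_line a c \<tau> = (\<lambda>\<alpha>. a \<alpha> + \<tau> * (c \<alpha> - a \<alpha>))"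

lemma on_line_forms: "a \<in> forms n d \<Longrightarrow> c \<in> forms n d \<Longrightarrow> on_line a c \<tau> \<in> forms n d"
  by (simp add: forms_def on_line_def)

lemma smooth_form_on_line_near_0:
  assumes a: "smooth_form 5 3 a" and c: "c \<in> forms 5 3"
  shows "\<exists>e>0. \<forall>\<tau>. norm \<tau> < e \<longrightarrow> smooth_form 5 3 (on_line a c \<tau>)"
proof -
  have a_forms: "a \<in> forms 5 3" using a by (simp add: smooth_form_def)
  define h where "h z = grad_norm2 (on_line a c (fst z)) (snd z)" for z
  have "continuous_on UNIV h"
    unfolding h_def grad_norm2_def sum_lessThan_5 form_deriv_5_3_0 form_deriv_5_3_1 form_deriv_5_3_2
      form_deriv_5_3_3 form_deriv_5_3_4
    by (simp add: on_line_def of_tuple5_def case_prod_beta, intro continuous_intros)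
  moreover have "h (0, y) \<noteq> 0" if "y \<in> sphere 0 1" for y
    using a that smooth_form_5_3_iff_grad_norm2[OF a_forms] by (simp add: h_def on_line_def)
  ultimately obtain e where e: "e > 0" "\<forall>\<tau>. dist \<tau> 0 < e \<longrightarrow> (\<forall>y\<in>sphere 0 1. h (\<tau>, y) \<noteq> 0)"
    using nonzero_near_compact[OF _ compact_sphere] by blast
  show ?thesis
  proof (intro exI[of _ e] conjI allI impI)
    fix \<tau> :: complex assume "norm \<tau> < e"
    then have "\<forall>y\<in>sphere 0 1. grad_norm2 (on_line a c \<tau>) y \<noteq> 0" using e(2) by (simp add: h_def)
    then show "smooth_form 5 3 (on_line a c \<tau>)"
      using smooth_form_5_3_iff_grad_norm2[OF on_line_forms[OF a_forms c]] by blast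
  qed (rule e(1))
qed

definition curve_defect ::
    "((nat \<Rightarrow> nat) \<Rightarrow> complex) \<Rightarrow> (complex \<times> complex \<times> complex \<times> complex) \<times> complex \<times> complex \<Rightarrow> real" where
  "curve_defect F = (\<lambda>(y, l, m). (cmod (form_eval 4 3 F (of_tuple4 y)))\<^sup>2 + (cmod (qQ (of_tuple4 y)))\<^sup>2
     + (\<Sum>j<4. (cmod (l * form_deriv 4 3 F j (of_tuple4 y) + m * qgrad (of_tuple4 y) j))\<^sup>2))"

lemma curve_defect_eq_0_iff:
  "curve_defect F (y, l, m) = 0 \<longleftrightarrow> form_eval 4 3 F (of_tuple4 y) = 0 \<and> qQ (of_tuple4 y) = 0 \<and>
     (\<forall>j<4. l * form_deriv 4 3 F j (of_tuple4 y) + m * qgrad (of_tuple4 y) j = 0)"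
proof -
  have "0 \<le> (\<Sum>j<4. (cmod (l * form_deriv 4 3 F j (of_tuple4 y) + m * qgrad (of_tuple4 y) j))\<^sup>2)"
    by (intro sum_nonneg) auto
  then show ?thesis
    unfolding curve_defect_def by (auto simp: add_nonneg_eq_0_iff sum_nonneg_eq_0_iff)
qed

lemma curve_defect_vanishes_on_spheres:
  assumes x: "nonzero_vec 4 x" "form_eval 4 3 F x = 0" "qQ x = 0"
    and lm: "(l, m) \<noteq> (0, 0)"
    and crit: "\<And>j. j < 4 \<Longrightarrow> l * form_deriv 4 3 F j x + m * qgrad x j = 0"
  shows "\<exists>k\<in>sphere 0 1 \<times> sphere 0 1. curve_defect F k = 0"
proof -
  define s where "s = 1 / norm (tuple4 x)"
  define y where "y = s *\<^sub>R tuple4 x"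
  have s: "s \<noteq> 0" using x(1) by (simp add: s_def tuple4_eq_0_iff)
  have y: "y \<in> sphere 0 1" using x(1) by (simp add: y_def s_def tuple4_eq_0_iff)
  have y_coord: "of_tuple4 y i = complex_of_real s * x i" if "i < 4" for i
    using that by (simp add: y_def of_tuple4_scaleR)
  (* The multipliers are rescaled differently, as qgrad is linear while the partial
     derivatives of F are quadratic. *)
  define \<rho> where "\<rho> = norm (l, m * complex_of_real s)"
  define w where "w = sgn (l, m * complex_of_real s)"
  have "(l, m * complex_of_real s) \<noteq> 0" using lm s by (simp add: zero_prod_def)
  then have w: "w \<in> sphere 0 1" by (simp add: w_def norm_sgn)
  have w_coords: "fst w = complex_of_real (1 / \<rho>) * l" "snd w = complex_of_real (1 / \<rho>) * (m * complex_of_real s)"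
    by (simp_all add: w_def \<rho>_def sgn_div_norm scaleR_conv_of_real divide_inverse)
  have "form_eval 4 3 F (of_tuple4 y) = 0"
    using x by (simp add: form_eval_cong[of 4 "of_tuple4 y", OF y_coord] form_eval_homogeneous)
  moreover have "qQ (of_tuple4 y) = 0"
    using x by (simp add: qQ_def y_coord power2_eq_square algebra_simps)
  moreover have "fst w * form_deriv 4 3 F j (of_tuple4 y) + snd w * qgrad (of_tuple4 y) j = 0"
    if "j < 4" for j
  proof -
    have "form_deriv 4 3 F j (of_tuple4 y) = (complex_of_real s)\<^sup>2 * form_deriv 4 3 F j x"
      by (simp add: form_deriv_cong[of 4 "of_tuple4 y", OF y_coord] form_deriv_homogeneous)
    moreover have "qgrad (of_tuple4 y) j = complex_of_real s * qgrad x j"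
      using that by (auto simp: qgrad_def y_coord)
    ultimately have "fst w * form_deriv 4 3 F j (of_tuple4 y) + snd w * qgrad (of_tuple4 y) j
        = complex_of_real (1 / \<rho>) * (complex_of_real s)\<^sup>2 * (l * form_deriv 4 3 F j x + m * qgrad x j)"
      by (simp add: w_coords power2_eq_square algebra_simps)
    then show ?thesis using crit[OF that] by simp
  qed
  ultimately have "curve_defect F (y, fst w, snd w) = 0"
    by (subst curve_defect_eq_0_iff) blast
  then show ?thesis using y w by force
qed

lemma smooth_curve_on_Q_iff_curve_defect:
  "smooth_curve_on_Q F \<longleftrightarrow> (\<forall>k\<in>sphere 0 1 \<times> sphere 0 1. curve_defect F k \<noteq> 0)"
proof
  assume smooth: "smooth_curve_on_Q F"
  show "\<forall>k\<in>sphere 0 1 \<times> sphere 0 1. curve_defect F k \<noteq> 0"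
  proof (clarify)
    fix y l m assume "y \<in> sphere 0 1" "(l, m) \<in> sphere 0 1" "curve_defect F (y, l, m) = 0"
    moreover have "nonzero_vec 4 (of_tuple4 y)" "(l, m) \<noteq> (0, 0)"
      using calculation(1,2) by (auto intro: nonzero_vec_of_tuple4 simp: zero_prod_def[symmetric])
    ultimately show False
      using smooth unfolding smooth_curve_on_Q_def curve_defect_eq_0_iff by blast
  qed
next
  assume "\<forall>k\<in>sphere 0 1 \<times> sphere 0 1. curve_defect F k \<noteq> 0"
  then show "smooth_curve_on_Q F"
    unfolding smooth_curve_on_Q_def using curve_defect_vanishes_on_spheres by blast
qed

lemma F_par_0: "F_par 0 = F0"
  by (simp add: F_par_def fun_eq_iff)

lemma smooth_curve_on_Q_F_par_near_0: "\<exists>e>0. \<forall>u. norm u < e \<longrightarrow> smooth_curve_on_Q (F_par u)"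
proof -
  define K where "K = sphere (0::complex \<times> complex \<times> complex \<times> complex) 1 \<times> sphere (0::complex \<times> complex) 1"
  define h where "h z = curve_defect (F_par (fst z)) (snd z)" for z
  have "continuous_on UNIV h"
    unfolding h_def curve_defect_def sum_lessThan_4 form_eval_4_3 form_deriv_4_3_0 form_deriv_4_3_1
      form_deriv_4_3_2 form_deriv_4_3_3
    by (simp add: F_par_def of_tuple4_def qQ_def qgrad_def case_prod_beta, intro continuous_intros)
  moreover have "compact K" unfolding K_def by (intro compact_Times compact_sphere)
  moreover have "h (0, k) \<noteq> 0" if "k \<in> K" for k
    using smooth_curve_on_Q_F0 that unfolding smooth_curve_on_Q_iff_curve_defect K_def
    by (cases k) (auto simp: h_def F_par_0)
  ultimately obtain e where e: "e > 0" "\<forall>u. dist u 0 < e \<longrightarrow> (\<forall>k\<in>K. h (u, k) \<noteq> 0)"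
    by (blast dest: nonzero_near_compact)
  show ?thesis
    using e unfolding smooth_curve_on_Q_iff_curve_defect by (auto simp: h_def K_def)
qed

section \<open>Dominance\<close>

definition coeff_vec :: "((nat \<Rightarrow> nat) \<Rightarrow> complex) \<Rightarrow> complex ^ cubic_index" where
  "coeff_vec c = (\<chi> m. c (cubic_mon m))"

lemma coeff_vec_inj:
  assumes "c \<in> forms 5 3" "d \<in> forms 5 3" "coeff_vec c = coeff_vec d"
  shows "c = d"
proof
  fix \<alpha>
  show "c \<alpha> = d \<alpha>"
  proof (cases "\<alpha> \<in> mons 5 3")
    case True
    then obtain m where "\<alpha> = cubic_mon m" by (auto simp: mons_5_3)
    then show ?thesis using assms(3) by (simp add: coeff_vec_def vec_eq_iff)
  qed (use assms(1,2) in \<open>simp add: forms_def\<close>)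
qed

lemma Phi_coeffs_eq_coeff_vec: "Phi u = form_eval 5 3 d \<Longrightarrow> Phi_coeffs u = coeff_vec d"
  by (simp add: Phi_coeffs_def coeff_vec_def coeff_extract_form_eval)

lemma Wform_cong: "(\<And>i. i < 5 \<Longrightarrow> x i = y i) \<Longrightarrow> Wform F t x = Wform F t y"
  by (simp add: Wform_def qQ_def form_eval_cong[of 4 x y])

lemma Phi_0: "Phi 0 = form_eval 5 3 W0"
proof
  fix x
  have "Phi 0 x = Wform F0 1 x"
    unfolding Phi_layers F_par_0 by (simp add: t_par_def Wform_cong[OF layers_0] del: layers_Cons)
  then show "Phi 0 x = form_eval 5 3 W0 x" by (simp add: Wform_F0_1)
qed

lemma Phi_coeffs_in_image_cubics:
  assumes "c \<in> forms 5 3" "smooth_form 5 3 c" "F_par u \<in> U0" "invertible_mat 5 (A_par u)"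
    and "Phi_coeffs u = coeff_vec c"
  shows "c \<in> image_cubics"
proof -
  obtain d where d: "d \<in> forms 5 3" "Phi u = form_eval 5 3 d"
    using is_form_Phi[of u] unfolding is_form_def by blast
  have "d = c"
    using coeff_vec_inj[OF d(1) assms(1)] assms(5) Phi_coeffs_eq_coeff_vec[OF d(2)] by simp
  then have "\<forall>x. form_eval 5 3 c x = 1 * Wform (F_par u) (t_par u) (matvec 5 (A_par u) x)"
    using d(2) unfolding \<open>d = c\<close> by (simp add: Phi_def fun_eq_iff)
  then show ?thesis
    unfolding image_cubics_def using assms(2-4)
    by (intro CollectI conjI exI[of _ "F_par u"] exI[of _ "t_par u"] exI[of _ "A_par u"] exI[of _ 1]) auto
qed

lemma dist_coeff_vec_on_line:
  "dist (coeff_vec a) (coeff_vec (on_line a c \<tau>)) \<le> norm \<tau> * (\<Sum>m\<in>UNIV. cmod (c (cubic_mon m) - a (cubic_mon m)))"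
proof -
  have "dist (coeff_vec a) (coeff_vec (on_line a c \<tau>)) \<le> (\<Sum>m\<in>UNIV. norm ((coeff_vec a - coeff_vec (on_line a c \<tau>)) $ m))"
    unfolding dist_norm norm_vec_def by (rule L2_set_le_sum) auto
  also have "\<dots> = norm \<tau> * (\<Sum>m\<in>UNIV. cmod (c (cubic_mon m) - a (cubic_mon m)))"
    by (simp add: coeff_vec_def on_line_def sum_distrib_left norm_mult)
  finally show ?thesis .
qed

lemma small_parameters_admissible:
  obtains \<delta> where "\<delta> > 0" "\<And>u. norm u < \<delta> \<Longrightarrow> F_par u \<in> U0 \<and> invertible_mat 5 (A_par u)"
proof -
  obtain e where e: "e > 0" "\<And>u. norm u < e \<Longrightarrow> smooth_curve_on_Q (F_par u)"
    using smooth_curve_on_Q_F_par_near_0 by blast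
  have "1 + u $ entry_index i i \<noteq> 0" if "norm u < 1" for u :: "complex ^ cubic_index" and i
  proof
    assume "1 + u $ entry_index i i = 0"
    then have "norm (u $ entry_index i i) = 1" by (simp add: add_eq_0_iff)
    moreover have "norm (u $ entry_index i i) \<le> norm u" by (rule Finite_Cartesian_Product.norm_nth_le)
    ultimately show False using that by simp
  qed
  then show ?thesis
    using e by (intro that[of "min e 1"]) (auto intro: F_par_in_U0 invertible_A_par)
qed

lemma coeffs_near_W0_in_image_cubics:
  assumes c: "c \<in> forms 5 3"
  shows "\<exists>e>0. \<forall>\<tau>. norm \<tau> < e \<longrightarrow> on_line W0 c \<tau> \<in> image_cubics"
proof -
  obtain \<delta> where \<delta>: "\<delta> > 0" "\<And>u. norm u < \<delta> \<Longrightarrow> F_par u \<in> U0 \<and> invertible_mat 5 (A_par u)"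
    using small_parameters_admissible by blast
  obtain \<epsilon> where \<epsilon>: "\<epsilon> > 0" "ball (coeff_vec W0) \<epsilon> \<subseteq> Phi_coeffs ` ball 0 \<delta>"
    using Phi_coeffs_covers_ball[OF \<delta>(1)] Phi_coeffs_eq_coeff_vec[OF Phi_0] by metis
  obtain e1 where e1: "e1 > 0" "\<And>\<tau>. norm \<tau> < e1 \<Longrightarrow> smooth_form 5 3 (on_line W0 c \<tau>)"
    using smooth_form_on_line_near_0[OF smooth_form_W0 c] by blast
  define M where "M = (\<Sum>m\<in>UNIV. cmod (c (cubic_mon m) - W0 (cubic_mon m))) + 1"
  have M: "M > 0" unfolding M_def by (smt (verit) sum_nonneg norm_ge_zero)
  have "on_line W0 c \<tau> \<in> image_cubics" if \<tau>: "norm \<tau> < min e1 (\<epsilon> / M)" for \<tau>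
  proof -
    have "dist (coeff_vec W0) (coeff_vec (on_line W0 c \<tau>)) \<le> norm \<tau> * M"
      using dist_coeff_vec_on_line[of W0 c \<tau>] by (smt (verit) M_def mult_left_mono norm_ge_zero)
    also have "\<dots> < \<epsilon>" using \<tau> M by (simp add: pos_less_divide_eq)
    finally obtain u where u: "norm u < \<delta>" "Phi_coeffs u = coeff_vec (on_line W0 c \<tau>)"
      using \<epsilon>(2) by force
    then show ?thesis
      using \<delta>(2)[OF u(1)] e1(2)[of \<tau>] \<tau>
      by (intro Phi_coeffs_in_image_cubics[OF on_line_forms[OF W0_forms c] _ _ _ u(2)]) auto
  qed
  then show ?thesis using e1(1) \<epsilon>(1) M by (intro exI[of _ "min e1 (\<epsilon> / M)"]) auto
qed

theorem lemma5p1: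
  shows "zariski_dense_in image_cubics (forms 5 3)"
proof (rule zariski_dense_inI_lines)
  show "image_cubics \<subseteq> forms 5 3"
    by (auto simp: image_cubics_def smooth_form_def)
  fix c assume "c \<in> forms 5 3"
  then show "\<exists>a e. e > 0 \<and> (\<forall>\<tau>. norm \<tau> < e \<longrightarrow> (\<lambda>i. a i + \<tau> * (c i - a i)) \<in> image_cubics)"
    using coeffs_near_W0_in_image_cubics unfolding on_line_def by blast
qed

end
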